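(* Let $D\ge1$, $p>0$, $b\ge 1$ an integer, and $u,v\in\mathbb{R}^D$ nonzero. Let $(i^*_u,t^*_u)$ and $(i^*_v,t^*_v)$ be the GCWS outputs for $u$ and $v$ computed with shared random numbers (as described in the context). Let $g$ be a random function from $\{1,\dots,2D\}\times\mathbb{Z}$ to $\{0,1,\dots,2^b-1\}$ whose values $g(x)$, $x\in\{1,\dots,2D\}\times\mathbb{Z}$, are independent and uniformly distributed, with $g$ independent of the GCWS randomness, and write $(i^*,t^* )_b=g(i^*,t^* )$. Then $$P\big[(i^*_u,t^*_u)_b=(i^*_v,t^*_v)_b\big]=\textit{pGMM}(u,v;p)+\frac{1}{2^b}\big\{1-\textit{pGMM}(u,v;p)\big\}.$$
   Context: Sign-splitting transformation: for $u\in\mathbb{R}^D$, define $\tilde u\in\mathbb{R}^{2D}$ by, for each $i$: if $u_i>0$ then $\tilde u_{2i-1}=u_i,\tilde u_{2i}=0$; if $u_i\le 0$ then $\tilde u_{2i-1}=0,\tilde u_{2i}=-u_i$. $\textit{pGMM}(u,v;p)=\sum_{i=1}^{2D}(\min\{\tilde u_i,\tilde v_i\})^p/\sum_{i=1}^{2D}(\max\{\tilde u_i,\tilde v_i\})^p$. GCWS procedure: draw independently for $i=1,\dots,2D$: $r_i\sim\mathrm{Gamma}(2,1)$, $c_i\sim\mathrm{Gamma}(2,1)$, $\beta_i\sim\mathrm{Uniform}(0,1)$. For each $i$ with $\tilde u_i>0$ set $t_i=\lfloor p\log(\tilde u_i)/r_i+\beta_i\rfloor$ and $a_i=\log(c_i)-r_i(t_i+1-\beta_i)$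 (indices with $\tilde u_i=0$ are skipped). Output $i^*=\arg\min_i a_i$, $t^*=t_{i^*}$. The same $r_i,c_i,\beta_i$ are used for $v$. *)

theory Defs
  imports "HOL-Probability.Probability"
begin

text \<open>Vectors u in R^D are functions nat => real, coordinates 0..D-1 (0-based).
  Split vector coordinates 0..2D-1: coordinate 2i is the paper's 2i-1, 2i+1 is the paper's 2i.\<close>

definition sign_split :: "(nat \<Rightarrow> real) \<Rightarrow> nat \<Rightarrow> real" where
  "sign_split u k = (if even k then (if u (k div 2) > 0 then u (k div 2) else 0)
                     else (if u (k div 2) > 0 then 0 else - u (k div 2)))"

definition pGMM :: "nat \<Rightarrow> (nat \<Rightarrow> real) \<Rightarrow> (nat \<Rightarrow> real) \<Rightarrow> real \<Rightarrow> real" where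
  "pGMM D u v p =
     (\<Sum>k<2*D. (min (sign_split u k) (sign_split v k)) powr p) /
     (\<Sum>k<2*D. (max (sign_split u k) (sign_split v k)) powr p)"

definition gcws_t :: "real \<Rightarrow> (nat \<Rightarrow> real) \<Rightarrow> (nat \<Rightarrow> real) \<Rightarrow> (nat \<Rightarrow> real) \<Rightarrow> nat \<Rightarrow> int" where
  "gcws_t p u r beta k = \<lfloor>p * ln (sign_split u k) / r k + beta k\<rfloor>"

definition gcws_a :: "real \<Rightarrow> (nat \<Rightarrow> real) \<Rightarrow> (nat \<Rightarrow> real) \<Rightarrow> (nat \<Rightarrow> real) \<Rightarrow> (nat \<Rightarrow> real) \<Rightarrow> nat \<Rightarrow> real" where
  "gcws_a p u r c beta k = ln (c k) - r k * (real_of_int (gcws_t p u r beta k) + 1 - beta k)"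

definition gcws_i :: "nat \<Rightarrow> real \<Rightarrow> (nat \<Rightarrow> real) \<Rightarrow> (nat \<Rightarrow> real) \<Rightarrow> (nat \<Rightarrow> real) \<Rightarrow> (nat \<Rightarrow> real) \<Rightarrow> nat" where
  "gcws_i D p u r c beta = (ARG_MIN (gcws_a p u r c beta) k. k < 2*D \<and> sign_split u k > 0)"

definition gcws :: "nat \<Rightarrow> real \<Rightarrow> (nat \<Rightarrow> real) \<Rightarrow> (nat \<Rightarrow> real) \<Rightarrow> (nat \<Rightarrow> real) \<Rightarrow> (nat \<Rightarrow> real) \<Rightarrow> nat \<times> int" where
  "gcws D p u r c beta = (let i = gcws_i D p u r c beta in (i, gcws_t p u r beta i))"

text \<open>Index type for all random variables: r_k, c_k, beta_k, and the values g(k,t) of the hash g.\<close>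

datatype rv_idx = RI nat | CI nat | BI nat | GI nat int

definition rv_indices :: "nat \<Rightarrow> rv_idx set" where
  "rv_indices D = {RI k | k. k < 2*D} \<union> {CI k | k. k < 2*D} \<union> {BI k | k. k < 2*D}
                  \<union> {GI k t | k t. k < 2*D}"

end

(*
  For one coordinate with log-weight lw = p * ln s, GCWS computes t = floor (lw / r + beta) and
  a = ln c - r * (t + 1 - beta) = ln c - lw - (r - d), where the slack d = r * frac (lw / r + beta)
  measures how far lw can decrease without changing t.  Splitting the Gamma(2, 1) variable r
  at the independent uniform fraction makes d and r - d independent standard exponentials, and
  then exp a is exponential with rate exp lw.  Hence the coordinate k minimising a wins the race
  with probability exp lw_k / sum_j exp lw_j, and independently of the race its slack is at
  least L with probability exp (- L).

  Lowering a weight can only raise the values a of the other coordinates, so the samples for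
  u and v coincide iff the winner k for the coordinatewise maximum of their split weights lies
  in both supports and its slack covers p * ln (max_k / min_k).  This has probability
  min_k^p / sum_j max_j^p, and summing over k gives pGMM.  Finally the hash values at two
  distinct samples are independent and uniform, so they collide with probability 2^-b.
*)
theory Submission
  imports Defs "HOL-Real_Asymp.Real_Asymp"
begin

lemma nn_integral_exp_neg_atLeast:
  "(\<integral>\<^sup>+x. ennreal (exp (- x)) * indicator {L..} x \<partial>lborel) = ennreal (exp (- L))"
proof -
  have "(\<integral>\<^sup>+x. ennreal (exp (- x)) * indicator {L..} x \<partial>lborel) = 0 - (- exp (- L))"
    by (rule nn_integral_FTC_atLeast[where F="\<lambda>x. - exp (- x)"])
       (auto intro!: derivative_eq_intros, real_asymp)
  then show ?thesis by simp
qed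

lemma nn_integral_mult_exp_neg_atLeast:
  assumes "s \<ge> 0"
  shows "(\<integral>\<^sup>+x. ennreal (x * exp (- x)) * indicator {s..} x \<partial>lborel) = ennreal ((1 + s) * exp (- s))"
proof -
  have "(\<integral>\<^sup>+x. ennreal (x * exp (- x)) * indicator {s..} x \<partial>lborel) = 0 - (- ((1 + s) * exp (- s)))"
    by (rule nn_integral_FTC_atLeast[where F="\<lambda>x. - ((1 + x) * exp (- x))"])
       (use assms in \<open>auto intro!: derivative_eq_intros simp: field_simps, real_asymp\<close>)
  then show ?thesis by simp
qed

lemma nn_integral_mult_exp_neg_scaled:
  assumes "a > 0"
  shows "(\<integral>\<^sup>+x. ennreal (x * exp (- a * x)) * indicator {0..} x \<partial>lborel) = ennreal (1 / a^2)"
proof -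
  have "(\<integral>\<^sup>+x. ennreal (x * exp (- a * x)) * indicator {0..} x \<partial>lborel)
      = 0 - (- (0 / a + 1 / a^2) * exp (- a * 0))"
    by (rule nn_integral_FTC_atLeast[where F="\<lambda>x. - (x / a + 1 / a^2) * exp (- a * x)"])
       (use assms in \<open>auto intro!: derivative_eq_intros simp: field_simps power2_eq_square, real_asymp\<close>)
  then show ?thesis by simp
qed

lemma nn_integral_exp_neg_div_square:
  assumes "\<kappa> \<ge> 0"
  shows "(\<integral>\<^sup>+y. ennreal (exp (- y)) * indicator {0..} y * ennreal (1 / (1 + \<kappa> * exp (- y))^2) \<partial>lborel)
     = ennreal (1 / (1 + \<kappa>))"
proof -
  have "(\<integral>\<^sup>+y. ennreal (exp (- y) / (1 + \<kappa> * exp (- y))^2) * indicator {0..} y \<partial>lborel)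
      = 0 - (- 1 / (exp 0 + \<kappa>))"
  proof (rule nn_integral_FTC_atLeast[where F="\<lambda>y. - 1 / (exp y + \<kappa>)"])
    fix x :: real
    have pos: "exp x + \<kappa> > 0"
      using assms by (smt (verit) exp_gt_zero)
    have "exp (- x) / (1 + \<kappa> * exp (- x))^2 = exp x / (exp x + \<kappa>)^2"
      using pos by (simp add: exp_minus field_simps power2_eq_square)
    then show "((\<lambda>y. - 1 / (exp y + \<kappa>)) has_real_derivative exp (- x) / (1 + \<kappa> * exp (- x))^2) (at x)"
      using pos by (auto intro!: derivative_eq_intros simp: power2_eq_square field_simps)
  next
    show "((\<lambda>y. - 1 / (exp y + \<kappa>)) \<longlongrightarrow> 0) at_top"
      using assms by real_asymp
  qed auto
  moreover have "ennreal (exp (- y) / (1 + \<kappa> * exp (- y))^2)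
      = ennreal (exp (- y)) * ennreal (1 / (1 + \<kappa> * exp (- y))^2)" for y
    by (simp add: ennreal_mult[symmetric])
  ultimately show ?thesis
    by (simp add: mult_ac)
qed

lemma nn_integral_exp_neg_gamma2_tail:
  assumes "K > 0"
  shows "(\<integral>\<^sup>+y. ennreal (exp (- y)) * indicator {0..} y *
            ennreal ((1 + K * exp y) * exp (- (K * exp y))) \<partial>lborel) = ennreal (exp (- K))"
proof -
  have "(\<integral>\<^sup>+y. ennreal (exp (- y) * (1 + K * exp y) * exp (- K * exp y)) * indicator {0..} y \<partial>lborel)
      = 0 - (- exp (- 0) * exp (- K * exp 0))"
    by (rule nn_integral_FTC_atLeast[where F="\<lambda>y. - exp (- y) * exp (- K * exp y)"])
       (use assms in \<open>auto intro!: derivative_eq_intros simp: field_simps exp_minus, real_asymp\<close>)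
  moreover have "ennreal (exp (- y) * (1 + K * exp y) * exp (- K * exp y))
      = ennreal (exp (- y)) * ennreal ((1 + K * exp y) * exp (- (K * exp y)))" for y
    using assms by (simp add: ennreal_mult[symmetric] mult.assoc)
  ultimately show ?thesis
    by (simp add: mult_ac)
qed

lemma nn_integral_lborel_translate:
  fixes f :: "real \<Rightarrow> ennreal"
  assumes "f \<in> borel_measurable borel"
  shows "(\<integral>\<^sup>+x. f (c + x) \<partial>lborel) = (\<integral>\<^sup>+x. f x \<partial>lborel)"
  using nn_integral_real_affine[OF assms, of 1 c] by simp

lemma nn_integral_indicator_Icc_Ico:
  fixes h :: "real \<Rightarrow> ennreal"
  shows "(\<integral>\<^sup>+x. h x * indicator {a..b} x \<partial>lborel) = (\<integral>\<^sup>+x. h x * indicator {a..<b} x \<partial>lborel)"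
  by (intro nn_integral_cong_AE eventually_mono[OF AE_lborel_singleton[of b]]) (auto simp: indicator_def)

lemma nn_integral_frac_translate_uniform:
  fixes h :: "real \<Rightarrow> ennreal"
  assumes [measurable]: "h \<in> borel_measurable borel"
  shows "(\<integral>\<^sup>+b. indicator {0..1} b * h (frac (x + b)) \<partial>lborel) = (\<integral>\<^sup>+u. indicator {0..1} u * h u \<partial>lborel)"
proof -
  define \<theta> where "\<theta> = frac x"
  have \<theta>: "0 \<le> \<theta>" "\<theta> < 1"
    unfolding \<theta>_def by (auto simp: frac_lt_1)
  have split: "h (frac (x + b)) * indicator {0..<1} b =
      h (\<theta> + b) * indicator {0..<1-\<theta>} b + h (\<theta> + b - 1) * indicator {1-\<theta>..<1} b" for b
  proof (cases "0 \<le> b \<and> b < 1")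
    case True
    then have "frac (x + b) = (if \<theta> + b < 1 then \<theta> + b else \<theta> + b - 1)"
      using frac_add[of x b] by (simp add: frac_eq \<theta>_def)
    then show ?thesis
      using True by (auto simp: indicator_def)
  qed (use \<theta> in \<open>auto simp: indicator_def\<close>)
  have "(\<integral>\<^sup>+b. indicator {0..1} b * h (frac (x + b)) \<partial>lborel)
      = (\<integral>\<^sup>+b. h (frac (x + b)) * indicator {0..<1} b \<partial>lborel)"
    using nn_integral_indicator_Icc_Ico[of "\<lambda>b. h (frac (x + b))" 0 1] by (simp add: mult.commute)
  also have "\<dots> = (\<integral>\<^sup>+b. h (\<theta> + b) * indicator {0..<1-\<theta>} b \<partial>lborel)
                + (\<integral>\<^sup>+b. h (\<theta> + b - 1) * indicator {1-\<theta>..<1} b \<partial>lborel)"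
    unfolding split by (rule nn_integral_add) auto
  also have "(\<integral>\<^sup>+b. h (\<theta> + b) * indicator {0..<1-\<theta>} b \<partial>lborel)
           = (\<integral>\<^sup>+b. (\<lambda>u. h u * indicator {\<theta>..<1} u) (\<theta> + b) \<partial>lborel)"
    by (intro nn_integral_cong) (auto simp: indicator_def)
  also have "\<dots> = (\<integral>\<^sup>+u. h u * indicator {\<theta>..<1} u \<partial>lborel)"
    by (rule nn_integral_lborel_translate) simp
  also have "(\<integral>\<^sup>+b. h (\<theta> + b - 1) * indicator {1-\<theta>..<1} b \<partial>lborel)
           = (\<integral>\<^sup>+b. (\<lambda>u. h u * indicator {0..<\<theta>} u) ((\<theta> - 1) + b) \<partial>lborel)"
    by (intro nn_integral_cong) (simp add: indicator_def algebra_simps)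
  also have "\<dots> = (\<integral>\<^sup>+u. h u * indicator {0..<\<theta>} u \<partial>lborel)"
    by (rule nn_integral_lborel_translate) simp
  also have "(\<integral>\<^sup>+u. h u * indicator {\<theta>..<1} u \<partial>lborel) + (\<integral>\<^sup>+u. h u * indicator {0..<\<theta>} u \<partial>lborel)
      = (\<integral>\<^sup>+u. h u * indicator {0..<1} u \<partial>lborel)"
    by (subst nn_integral_add[symmetric]) (use \<theta> in \<open>auto intro!: nn_integral_cong simp: indicator_def\<close>)
  also have "\<dots> = (\<integral>\<^sup>+u. indicator {0..1} u * h u \<partial>lborel)"
    using nn_integral_indicator_Icc_Ico[of h 0 1] by (simp add: mult.commute)
  finally show ?thesis .
qed

lemma nn_integral_exp_neg_convolution:
  fixes \<Phi> :: "real \<times> real \<Rightarrow> ennreal"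
  assumes [measurable]: "\<Phi> \<in> borel_measurable (borel \<Otimes>\<^sub>M borel)"
  shows "(\<integral>\<^sup>+r. ennreal (exp (- r)) * indicator {0..} r * (\<integral>\<^sup>+x. indicator {0..r} x * \<Phi> (x, r - x) \<partial>lborel) \<partial>lborel)
       = (\<integral>\<^sup>+x. ennreal (exp (- x)) * indicator {0..} x *
            (\<integral>\<^sup>+y. ennreal (exp (- y)) * indicator {0..} y * \<Phi> (x, y) \<partial>lborel) \<partial>lborel)"
proof -
  define F where "F r x = ennreal (exp (- r)) * indicator {0..} r * (indicator {0..r} x * \<Phi> (x, r - x))" for r x
  have [measurable]: "(\<lambda>(r, x). F r x) \<in> borel_measurable (lborel \<Otimes>\<^sub>M lborel)"
    unfolding F_def indicator_def by (simp add: case_prod_beta') measurable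
  have "(\<integral>\<^sup>+r. ennreal (exp (- r)) * indicator {0..} r * (\<integral>\<^sup>+x. indicator {0..r} x * \<Phi> (x, r - x) \<partial>lborel) \<partial>lborel)
      = (\<integral>\<^sup>+r. \<integral>\<^sup>+x. F r x \<partial>lborel \<partial>lborel)"
    unfolding F_def by (intro nn_integral_cong nn_integral_cmult[symmetric]) measurable
  also have "\<dots> = (\<integral>\<^sup>+x. \<integral>\<^sup>+r. F r x \<partial>lborel \<partial>lborel)"
    by (rule lborel_pair.Fubini'[symmetric]) measurable
  also have "\<dots> = (\<integral>\<^sup>+x. \<integral>\<^sup>+y. F (x + y) x \<partial>lborel \<partial>lborel)"
    by (intro nn_integral_cong nn_integral_lborel_translate[symmetric]) measurable
  also have "\<dots> = (\<integral>\<^sup>+x. ennreal (exp (- x)) * indicator {0..} x *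
            (\<integral>\<^sup>+y. ennreal (exp (- y)) * indicator {0..} y * \<Phi> (x, y) \<partial>lborel) \<partial>lborel)"
  proof (intro nn_integral_cong)
    fix x :: real
    have "ennreal (exp (- x - y)) = ennreal (exp (- x)) * ennreal (exp (- y))" for y
      by (simp add: ennreal_mult[symmetric] exp_diff exp_minus field_simps)
    then have "F (x + y) x
        = ennreal (exp (- x)) * indicator {0..} x * (ennreal (exp (- y)) * indicator {0..} y * \<Phi> (x, y))" for y
      by (auto simp: F_def indicator_def mult_ac)
    then show "(\<integral>\<^sup>+y. F (x + y) x \<partial>lborel)
        = ennreal (exp (- x)) * indicator {0..} x * (\<integral>\<^sup>+y. ennreal (exp (- y)) * indicator {0..} y * \<Phi> (x, y) \<partial>lborel)"
      by (simp add: nn_integral_cmult)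
  qed
  finally show ?thesis .
qed

text \<open>Splitting a \<open>Gamma(2, 1)\<close> variable at an independent uniform fraction yields two
  independent standard exponential variables.\<close>
lemma nn_integral_gamma2_uniform_split:
  fixes \<Phi> :: "real \<times> real \<Rightarrow> ennreal"
  assumes [measurable]: "\<Phi> \<in> borel_measurable (borel \<Otimes>\<^sub>M borel)"
  shows "(\<integral>\<^sup>+r. ennreal (erlang_density 1 1 r) * (\<integral>\<^sup>+u. indicator {0..1} u * \<Phi> (r * u, r - r * u) \<partial>lborel) \<partial>lborel)
       = (\<integral>\<^sup>+x. ennreal (exp (- x)) * indicator {0..} x *
            (\<integral>\<^sup>+y. ennreal (exp (- y)) * indicator {0..} y * \<Phi> (x, y) \<partial>lborel) \<partial>lborel)"
proof -
  have "ennreal (erlang_density 1 1 r) * (\<integral>\<^sup>+u. indicator {0..1} u * \<Phi> (r * u, r - r * u) \<partial>lborel)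
      = ennreal (exp (- r)) * indicator {0..} r * (\<integral>\<^sup>+x. indicator {0..r} x * \<Phi> (x, r - x) \<partial>lborel)"
    if "r \<noteq> 0" for r
  proof (cases "r < 0")
    case False
    with that have r: "r > 0" by simp
    have "(\<integral>\<^sup>+x. indicator {0..r} x * \<Phi> (x, r - x) \<partial>lborel)
        = ennreal r * (\<integral>\<^sup>+u. indicator {0..r} (0 + r * u) * \<Phi> (0 + r * u, r - (0 + r * u)) \<partial>lborel)"
      using nn_integral_real_affine[of "\<lambda>x. indicator {0..r} x * \<Phi> (x, r - x)" r 0] r by simp
    also have "(\<integral>\<^sup>+u. indicator {0..r} (0 + r * u) * \<Phi> (0 + r * u, r - (0 + r * u)) \<partial>lborel)
        = (\<integral>\<^sup>+u. indicator {0..1} u * \<Phi> (r * u, r - r * u) \<partial>lborel)"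
      using r by (intro nn_integral_cong) (auto simp: indicator_def zero_le_mult_iff mult_le_cancel_left1)
    finally show ?thesis
      using r by (simp add: erlang_density_def ennreal_mult mult_ac)
  qed (simp add: erlang_density_def)
  then have "(\<integral>\<^sup>+r. ennreal (erlang_density 1 1 r) * (\<integral>\<^sup>+u. indicator {0..1} u * \<Phi> (r * u, r - r * u) \<partial>lborel) \<partial>lborel)
     = (\<integral>\<^sup>+r. ennreal (exp (- r)) * indicator {0..} r * (\<integral>\<^sup>+x. indicator {0..r} x * \<Phi> (x, r - x) \<partial>lborel) \<partial>lborel)"
    by (intro nn_integral_cong_AE eventually_mono[OF AE_lborel_singleton[of 0]]) simp
  then show ?thesis
    by (simp add: nn_integral_exp_neg_convolution)
qed

section \<open>GCWS as a function of its random numbers\<close>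

text \<open>One coordinate of GCWS, with log-weight \<open>lw = p * ln s\<close> and random numbers \<open>r, c, \<beta>\<close>.\<close>

definition cws_t :: "real \<Rightarrow> real \<Rightarrow> real \<Rightarrow> int" where
  "cws_t lw r \<beta> = \<lfloor>lw / r + \<beta>\<rfloor>"

definition cws_a :: "real \<Rightarrow> real \<Rightarrow> real \<Rightarrow> real \<Rightarrow> real" where
  "cws_a lw r c \<beta> = ln c - r * (real_of_int (cws_t lw r \<beta>) + 1 - \<beta>)"

definition cws_slack :: "real \<Rightarrow> real \<Rightarrow> real \<Rightarrow> real" where
  "cws_slack lw r \<beta> = lw - r * (real_of_int (cws_t lw r \<beta>) - \<beta>)"

lemma cws_slack_eq_frac: "r \<noteq> 0 \<Longrightarrow> cws_slack lw r \<beta> = r * frac (lw / r + \<beta>)"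
  by (simp add: cws_slack_def cws_t_def frac_def algebra_simps)

lemma cws_a_eq_slack: "cws_a lw r c \<beta> = ln c - lw - (r - cws_slack lw r \<beta>)"
  by (simp add: cws_a_def cws_slack_def algebra_simps)

lemma cws_t_mono: "lm \<le> lw \<Longrightarrow> r > 0 \<Longrightarrow> cws_t lm r \<beta> \<le> cws_t lw r \<beta>"
  unfolding cws_t_def by (intro floor_mono) (simp add: divide_right_mono)

lemma cws_a_antimono: "lm \<le> lw \<Longrightarrow> r > 0 \<Longrightarrow> cws_a lw r c \<beta> \<le> cws_a lm r c \<beta>"
  using cws_t_mono[of lm lw r \<beta>] unfolding cws_a_def by (simp add: mult_left_mono)

lemma cws_t_eq_iff:
  assumes "lm \<le> lw" "r > 0"
  shows "cws_t lm r \<beta> = cws_t lw r \<beta> \<longleftrightarrow> lw - lm \<le> cws_slack lw r \<beta>"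
proof -
  have "lw - lm \<le> cws_slack lw r \<beta> \<longleftrightarrow> real_of_int (cws_t lw r \<beta>) \<le> lm / r + \<beta>"
    using assms(2) unfolding cws_slack_def by (simp add: field_simps)
  also have "\<dots> \<longleftrightarrow> cws_t lw r \<beta> \<le> cws_t lm r \<beta>"
    unfolding cws_t_def[of lm] by (simp add: le_floor_iff)
  finally show ?thesis
    using cws_t_mono[OF assms, of \<beta>] by linarith
qed

text \<open>\<open>ARG_MIN\<close> breaks ties in the minimum arbitrarily; they occur with probability zero.\<close>

definition cws_index :: "nat \<Rightarrow> real \<Rightarrow> (nat \<Rightarrow> real) \<Rightarrow> (nat \<Rightarrow> real) \<Rightarrow> (nat \<Rightarrow> real) \<Rightarrow> (nat \<Rightarrow> real) \<Rightarrow> nat" where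
  "cws_index N p s r c \<beta> = (ARG_MIN (\<lambda>k. cws_a (p * ln (s k)) (r k) (c k) (\<beta> k)) k. k < N \<and> 0 < s k)"

definition cws :: "nat \<Rightarrow> real \<Rightarrow> (nat \<Rightarrow> real) \<Rightarrow> (nat \<Rightarrow> real) \<Rightarrow> (nat \<Rightarrow> real) \<Rightarrow> (nat \<Rightarrow> real) \<Rightarrow> nat \<times> int" where
  "cws N p s r c \<beta> = (let i = cws_index N p s r c \<beta> in (i, cws_t (p * ln (s i)) (r i) (\<beta> i)))"

lemma gcws_eq_cws: "gcws D p u r c \<beta> = cws (2 * D) p (sign_split u) r c \<beta>"
proof -
  have a: "gcws_a p u r c \<beta> = (\<lambda>k. cws_a (p * ln (sign_split u k)) (r k) (c k) (\<beta> k))"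
    by (simp add: fun_eq_iff gcws_a_def gcws_t_def cws_a_def cws_t_def)
  show ?thesis
    unfolding gcws_def gcws_i_def cws_def cws_index_def a by (simp add: gcws_t_def cws_t_def)
qed

lemma sign_split_nonneg: "0 \<le> sign_split u k"
  by (simp add: sign_split_def)

lemma sign_split_support:
  assumes "\<exists>i<D. u i \<noteq> 0"
  shows "\<exists>k<2 * D. 0 < sign_split u k"
proof -
  obtain i where i: "i < D" "u i \<noteq> 0"
    using assms by blast
  then have "0 < sign_split u (if u i > 0 then 2 * i else 2 * i + 1)"
    by (auto simp: sign_split_def)
  then show ?thesis
    using i(1) by (intro exI[of _ "if u i > 0 then 2 * i else 2 * i + 1"]) auto
qed

lemma cws_index_in_support:
  assumes "\<exists>k<N. 0 < s k"
  shows "cws_index N p s r c \<beta> < N \<and> 0 < s (cws_index N p s r c \<beta>)"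
proof -
  let ?f = "\<lambda>k. cws_a (p * ln (s k)) (r k) (c k) (\<beta> k)" and ?P = "\<lambda>k. k < N \<and> 0 < s k"
  have "finite {k. ?P k}" "{k. ?P k} \<noteq> {}"
    using assms by auto
  from ex_is_arg_min_if_finite[OF this, of ?f] have "is_arg_min ?f ?P (arg_min ?f ?P)"
    unfolding arg_min_def by (simp add: someI_ex)
  then show ?thesis
    by (simp add: cws_index_def is_arg_min_def)
qed

lemma fst_cws_less: "\<exists>k<N. 0 < s k \<Longrightarrow> fst (cws N p s r c \<beta>) < N"
  using cws_index_in_support by (simp add: cws_def Let_def)

lemma cws_cong:
  assumes "\<exists>k<N. 0 < s k" and "\<And>k. k < N \<Longrightarrow> r k = r' k \<and> c k = c' k \<and> \<beta> k = \<beta>' k"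
  shows "cws N p s r c \<beta> = cws N p s r' c' \<beta>'"
proof -
  have "cws_index N p s r c \<beta> = cws_index N p s r' c' \<beta>'"
    unfolding cws_index_def arg_min_def is_arg_min_def using assms(2) by (metis (no_types, lifting))
  then show ?thesis
    using cws_index_in_support[OF assms(1), of p r c \<beta>] assms(2) by (simp add: cws_def)
qed

text \<open>Lowering weights can only raise the values \<open>cws_a\<close> (\<open>cws_a_antimono\<close>), so a strict winner
  \<open>k0\<close> for \<open>w\<close> still wins for \<open>s \<le> w\<close> as long as its own level \<open>t\<close> is unchanged.\<close>
lemma cws_dominated_eq_iff:
  fixes s w :: "nat \<Rightarrow> real"
  assumes p: "p > 0"
    and le: "\<And>k. k < N \<Longrightarrow> 0 \<le> s k \<and> s k \<le> w k" and r: "\<And>k. k < N \<Longrightarrow> r k > 0"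
    and supp: "\<exists>k<N. 0 < s k" and k0: "k0 < N"
    and wins: "\<And>j. j < N \<Longrightarrow> 0 < w j \<Longrightarrow> j \<noteq> k0 \<Longrightarrow>
        cws_a (p * ln (w k0)) (r k0) (c k0) (\<beta> k0) < cws_a (p * ln (w j)) (r j) (c j) (\<beta> j)"
  shows "cws N p s r c \<beta> = (k0, cws_t (p * ln (w k0)) (r k0) (\<beta> k0)) \<longleftrightarrow>
           0 < s k0 \<and> cws_t (p * ln (s k0)) (r k0) (\<beta> k0) = cws_t (p * ln (w k0)) (r k0) (\<beta> k0)"
    (is "_ = (k0, ?t) \<longleftrightarrow> _")
proof
  assume "cws N p s r c \<beta> = (k0, ?t)"
  then show "0 < s k0 \<and> cws_t (p * ln (s k0)) (r k0) (\<beta> k0) = ?t"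
    using cws_index_in_support[OF supp, of p r c \<beta>] by (auto simp: cws_def Let_def)
next
  assume s0: "0 < s k0 \<and> cws_t (p * ln (s k0)) (r k0) (\<beta> k0) = ?t"
  let ?a = "\<lambda>s k. cws_a (p * ln (s k)) (r k) (c k) (\<beta> k)"
  have strict: "?a s k0 < ?a s j" if "j < N" "0 < s j" "j \<noteq> k0" for j
  proof -
    have "?a s k0 = ?a w k0"
      using s0 by (simp add: cws_a_def)
    also have "\<dots> < ?a w j"
      using wins[of j] le[of j] that by auto
    also have "\<dots> \<le> ?a s j"
      using le[of j] that p r[of j] by (intro cws_a_antimono) auto
    finally show ?thesis .
  qed
  have "cws_index N p s r c \<beta> = k0"
    unfolding cws_index_def
  proof (rule arg_minI[where x = k0])
    show "k0 < N \<and> 0 < s k0"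
      using s0 k0 by simp
  next
    fix j assume "j < N \<and> 0 < s j"
    then show "\<not> ?a s j < ?a s k0"
      using strict[of j] by (cases "j = k0") auto
  next
    fix j assume "j < N \<and> 0 < s j" "\<forall>i. i < N \<and> 0 < s i \<longrightarrow> \<not> ?a s i < ?a s j"
    then show "j = k0"
      using strict[of j] s0 k0 by force
  qed
  then show "cws N p s r c \<beta> = (k0, ?t)"
    using s0 by (simp add: cws_def)
qed

text \<open>Compare both \<open>S\<close> and \<open>T\<close> with their maximum \<open>W\<close>: the one attaining \<open>W k0\<close> always reproduces
  the sample of \<open>W\<close>, so the two samples agree iff both do.\<close>
lemma cws_eq_iff:
  fixes S T W :: "nat \<Rightarrow> real"
  defines "W \<equiv> \<lambda>k. max (S k) (T k)"
  assumes p: "p > 0" and S: "\<And>k. 0 \<le> S k" and T: "\<And>k. 0 \<le> T k"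
    and suppS: "\<exists>k<N. 0 < S k" and suppT: "\<exists>k<N. 0 < T k"
    and r: "\<And>k. k < N \<Longrightarrow> r k > 0" and k0: "k0 < N" "0 < W k0"
    and wins: "\<And>j. j < N \<Longrightarrow> 0 < W j \<Longrightarrow> j \<noteq> k0 \<Longrightarrow>
        cws_a (p * ln (W k0)) (r k0) (c k0) (\<beta> k0) < cws_a (p * ln (W j)) (r j) (c j) (\<beta> j)"
  shows "cws N p S r c \<beta> = cws N p T r c \<beta> \<longleftrightarrow> 0 < S k0 \<and> 0 < T k0 \<and>
           p * ln (W k0) - p * ln (min (S k0) (T k0)) \<le> cws_slack (p * ln (W k0)) (r k0) (\<beta> k0)"
proof -
  define t where "t = cws_t (p * ln (W k0)) (r k0) (\<beta> k0)"
  define agrees where "agrees s \<longleftrightarrow> 0 < s k0 \<and> cws_t (p * ln (s k0)) (r k0) (\<beta> k0) = t" for s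
  have "cws N p S r c \<beta> = (k0, t) \<longleftrightarrow> agrees S"
    unfolding agrees_def t_def W_def
    by (rule cws_dominated_eq_iff[OF p _ r suppS k0(1)]) (use S wins in \<open>auto simp: W_def\<close>)
  moreover have "cws N p T r c \<beta> = (k0, t) \<longleftrightarrow> agrees T"
    unfolding agrees_def t_def W_def
    by (rule cws_dominated_eq_iff[OF p _ r suppT k0(1)]) (use T wins in \<open>auto simp: W_def\<close>)
  moreover have "agrees S \<or> agrees T"
    using k0(2) by (auto simp: agrees_def t_def W_def max_def split: if_splits)
  ultimately have "cws N p S r c \<beta> = cws N p T r c \<beta> \<longleftrightarrow> agrees S \<and> agrees T"
    by auto
  also have "\<dots> \<longleftrightarrow> 0 < S k0 \<and> 0 < T k0 \<and>
      p * ln (W k0) - p * ln (min (S k0) (T k0)) \<le> cws_slack (p * ln (W k0)) (r k0) (\<beta> k0)"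
  proof -
    have agrees_iff: "agrees s \<longleftrightarrow> p * ln (W k0) - p * ln (s k0) \<le> cws_slack (p * ln (W k0)) (r k0) (\<beta> k0)"
      if "0 < s k0" "s k0 \<le> W k0" for s
    proof -
      have "p * ln (s k0) \<le> p * ln (W k0)"
        using that p by (intro mult_left_mono) auto
      from cws_t_eq_iff[OF this r[OF k0(1)]] show ?thesis
        using that(1) by (simp add: agrees_def t_def)
    qed
    show ?thesis
    proof (cases "0 < S k0 \<and> 0 < T k0")
      case True
      have "p * ln (min (S k0) (T k0)) = min (p * ln (S k0)) (p * ln (T k0))"
        using True p by (auto simp: min_def mult_left_mono)
      then show ?thesis
        using True agrees_iff[of S] agrees_iff[of T] by (auto simp: W_def)
    qed (auto simp: agrees_def)
  qed
  finally show ?thesis .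
qed

lemma measurable_cws_t [measurable (raw)]:
  assumes [measurable]: "f \<in> M \<rightarrow>\<^sub>M borel" "g \<in> M \<rightarrow>\<^sub>M borel" "h \<in> M \<rightarrow>\<^sub>M borel"
  shows "(\<lambda>x. cws_t (f x) (g x) (h x)) \<in> M \<rightarrow>\<^sub>M count_space UNIV"
  unfolding cws_t_def by measurable

lemma measurable_of_int_cws_t [measurable (raw)]:
  assumes "f \<in> M \<rightarrow>\<^sub>M borel" "g \<in> M \<rightarrow>\<^sub>M borel" "h \<in> M \<rightarrow>\<^sub>M borel"
  shows "(\<lambda>x. real_of_int (cws_t (f x) (g x) (h x))) \<in> borel_measurable M"
  by (rule measurable_compose[OF measurable_cws_t[OF assms]]) simp

lemma measurable_cws_a [measurable (raw)]:
  assumes [measurable]: "f \<in> M \<rightarrow>\<^sub>M borel" "g \<in> M \<rightarrow>\<^sub>M borel" "h \<in> M \<rightarrow>\<^sub>M borel" "k \<in> M \<rightarrow>\<^sub>M borel"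
  shows "(\<lambda>x. cws_a (f x) (g x) (h x) (k x)) \<in> borel_measurable M"
  unfolding cws_a_def by measurable

lemma measurable_cws_slack [measurable (raw)]:
  assumes [measurable]: "f \<in> M \<rightarrow>\<^sub>M borel" "g \<in> M \<rightarrow>\<^sub>M borel" "h \<in> M \<rightarrow>\<^sub>M borel"
  shows "(\<lambda>x. cws_slack (f x) (g x) (h x)) \<in> borel_measurable M"
  unfolding cws_slack_def by measurable

text \<open>The set of minimisers takes only finitely many values, each on a measurable set, and
  \<open>arg_min\<close> applies a fixed choice function to it.\<close>
lemma measurable_arg_min_finite:
  fixes f :: "'i \<Rightarrow> 'a \<Rightarrow> real"
  assumes fin: "finite {k. P k}" and f: "\<And>k. P k \<Longrightarrow> f k \<in> borel_measurable M"
  shows "(\<lambda>x. arg_min (\<lambda>k. f k x) P) \<in> M \<rightarrow>\<^sub>M count_space UNIV"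
proof -
  define K where "K = {k. P k}"
  define g where "g k = (if P k then f k else (\<lambda>_. 0))" for k
  have [measurable]: "g k \<in> borel_measurable M" for k
    by (cases "P k") (simp_all add: g_def f)
  define minimizers where "minimizers x = {k\<in>K. \<forall>j\<in>K. g k x \<le> g j x}" for x
  have "finite (Pow K)"
    using fin by (simp add: K_def)
  have "minimizers \<in> M \<rightarrow>\<^sub>M count_space (Pow K)"
  proof (rule measurable_count_space_eq2[OF \<open>finite (Pow K)\<close>, THEN iffD2], intro conjI ballI)
    fix B assume "B \<in> Pow K"
    then have "minimizers x = B \<longleftrightarrow> (\<forall>k\<in>K. k \<in> B \<longleftrightarrow> (\<forall>j\<in>K. g k x \<le> g j x))" for x
      unfolding minimizers_def set_eq_iff by blast
    then have "minimizers -` {B} \<inter> space M = {x \<in> space M. \<forall>k\<in>K. k \<in> B \<longleftrightarrow> (\<forall>j\<in>K. g k x \<le> g j x)}"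
      by blast
    also have "\<dots> \<in> sets M"
      using fin unfolding K_def by measurable
    finally show "minimizers -` {B} \<inter> space M \<in> sets M" .
  next
    show "minimizers \<in> space M \<rightarrow> Pow K"
      unfolding minimizers_def by blast
  qed
  then have "(\<lambda>x. (\<lambda>B. SOME k. k \<in> B) (minimizers x)) \<in> M \<rightarrow>\<^sub>M count_space UNIV"
    by (rule measurable_compose) simp
  moreover have "arg_min (\<lambda>k. f k x) P = (SOME k. k \<in> minimizers x)" for x
    unfolding arg_min_def is_arg_min_linorder minimizers_def K_def g_def
    by (intro arg_cong[where f = Eps] ext) auto
  ultimately show ?thesis
    by simp
qed

lemma measurable_cws_index:
  assumes "\<And>k. k < N \<Longrightarrow> (\<lambda>x. r x k) \<in> borel_measurable M"
    and "\<And>k. k < N \<Longrightarrow> (\<lambda>x. c x k) \<in> borel_measurable M"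
    and "\<And>k. k < N \<Longrightarrow> (\<lambda>x. \<beta> x k) \<in> borel_measurable M"
  shows "(\<lambda>x. cws_index N p s (r x) (c x) (\<beta> x)) \<in> M \<rightarrow>\<^sub>M count_space UNIV"
  unfolding cws_index_def
  by (rule measurable_arg_min_finite) (use assms in \<open>auto intro: finite_subset[of _ "{..<N}"]\<close>)

lemma measurable_cws:
  assumes supp: "\<exists>k<N. 0 < s k"
    and [measurable]: "\<And>k. k < N \<Longrightarrow> (\<lambda>x. r x k) \<in> borel_measurable M"
      "\<And>k. k < N \<Longrightarrow> (\<lambda>x. c x k) \<in> borel_measurable M"
      "\<And>k. k < N \<Longrightarrow> (\<lambda>x. \<beta> x k) \<in> borel_measurable M"
  shows "(\<lambda>x. cws N p s (r x) (c x) (\<beta> x)) \<in> M \<rightarrow>\<^sub>M count_space UNIV"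
proof (subst measurable_count_space_eq2_countable, intro conjI ballI)
  fix q :: "nat \<times> int"
  obtain a t where q: "q = (a, t)"
    by fastforce
  let ?i = "\<lambda>x. cws_index N p s (r x) (c x) (\<beta> x)"
  have i: "?i \<in> M \<rightarrow>\<^sub>M count_space UNIV"
    by (rule measurable_cws_index) auto
  show "(\<lambda>x. cws N p s (r x) (c x) (\<beta> x)) -` {q} \<inter> space M \<in> sets M"
  proof (cases "a < N")
    case True
    then have "(\<lambda>x. cws N p s (r x) (c x) (\<beta> x)) -` {q} \<inter> space M
        = (?i -` {a} \<inter> space M) \<inter> {x \<in> space M. cws_t (p * ln (s a)) (r x a) (\<beta> x a) = t}"
      by (auto simp: q cws_def Let_def)
    also have "\<dots> \<in> sets M"
      using True measurable_sets[OF i, of "{a}"] by measurable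
    finally show ?thesis .
  next
    case False
    then have "(\<lambda>x. cws N p s (r x) (c x) (\<beta> x)) -` {q} \<inter> space M = {}"
      using fst_cws_less[OF supp] by (auto simp: q) (metis fst_conv)
    then show ?thesis
      by simp
  qed
qed simp

section \<open>The law of one coordinate\<close>

lemma nn_integral_gamma2_uniform_slack:
  fixes \<Phi> :: "real \<times> real \<Rightarrow> ennreal"
  assumes [measurable]: "\<Phi> \<in> borel_measurable (borel \<Otimes>\<^sub>M borel)"
  shows "(\<integral>\<^sup>+r. ennreal (erlang_density 1 1 r) *
            (\<integral>\<^sup>+\<beta>. indicator {0..1} \<beta> * \<Phi> (cws_slack lw r \<beta>, r - cws_slack lw r \<beta>) \<partial>lborel) \<partial>lborel)
       = (\<integral>\<^sup>+x. ennreal (exp (- x)) * indicator {0..} x *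
            (\<integral>\<^sup>+y. ennreal (exp (- y)) * indicator {0..} y * \<Phi> (x, y) \<partial>lborel) \<partial>lborel)"
proof -
  have "ennreal (erlang_density 1 1 r) *
          (\<integral>\<^sup>+\<beta>. indicator {0..1} \<beta> * \<Phi> (cws_slack lw r \<beta>, r - cws_slack lw r \<beta>) \<partial>lborel)
      = ennreal (erlang_density 1 1 r) * (\<integral>\<^sup>+u. indicator {0..1} u * \<Phi> (r * u, r - r * u) \<partial>lborel)" for r
  proof (cases "r > 0")
    case True
    have "(\<integral>\<^sup>+\<beta>. indicator {0..1} \<beta> * \<Phi> (cws_slack lw r \<beta>, r - cws_slack lw r \<beta>) \<partial>lborel)
        = (\<integral>\<^sup>+\<beta>. indicator {0..1} \<beta> * (\<lambda>u. \<Phi> (r * u, r - r * u)) (frac (lw / r + \<beta>)) \<partial>lborel)"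
      using True by (simp add: cws_slack_eq_frac)
    also have "\<dots> = (\<integral>\<^sup>+u. indicator {0..1} u * \<Phi> (r * u, r - r * u) \<partial>lborel)"
      by (rule nn_integral_frac_translate_uniform) measurable
    finally show ?thesis
      by simp
  qed (simp add: erlang_density_def)
  then show ?thesis
    by (simp add: nn_integral_gamma2_uniform_split del: One_nat_def)
qed

lemma nn_integral_gamma2_ln_greater:
  "(\<integral>\<^sup>+c. ennreal (erlang_density 1 1 c) * indicator {z<..} (ln c - w) \<partial>lborel)
   = ennreal ((1 + exp (z + w)) * exp (- exp (z + w)))"
proof -
  have "ennreal (erlang_density 1 1 c) * indicator {z<..} (ln c - w)
      = ennreal (c * exp (- c)) * indicator {exp (z + w)<..} c" for c
  proof (cases "c > 0")
    case True
    then have "z < ln c - w \<longleftrightarrow> exp (z + w) < c"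
      by (metis exp_less_cancel_iff exp_ln less_diff_eq)
    then show ?thesis
      using True by (simp add: erlang_density_def indicator_def)
  next
    case False
    then have "\<not> exp (z + w) < c"
      using exp_gt_zero[of "z + w"] by linarith
    with False show ?thesis
      by (simp add: erlang_density_def indicator_def)
  qed
  then have "(\<integral>\<^sup>+c. ennreal (erlang_density 1 1 c) * indicator {z<..} (ln c - w) \<partial>lborel)
      = (\<integral>\<^sup>+c. ennreal (c * exp (- c)) * indicator {exp (z + w)<..} c \<partial>lborel)"
    by simp
  also have "\<dots> = (\<integral>\<^sup>+c. ennreal (c * exp (- c)) * indicator {exp (z + w)..} c \<partial>lborel)"
    by (intro nn_integral_cong_AE eventually_mono[OF AE_lborel_singleton[of "exp (z + w)"]])
       (auto simp: indicator_def)
  also have "\<dots> = ennreal ((1 + exp (z + w)) * exp (- exp (z + w)))"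
    by (simp add: nn_integral_mult_exp_neg_atLeast)
  finally show ?thesis .
qed

lemma nn_integral_gamma2_laplace:
  assumes "\<mu> \<ge> 0"
  shows "(\<integral>\<^sup>+c. ennreal (erlang_density 1 1 c) * ennreal (exp (- \<mu> * exp (ln c - w))) \<partial>lborel)
       = ennreal (1 / (1 + \<mu> * exp (- w))^2)"
proof -
  define a where "a = 1 + \<mu> * exp (- w)"
  have "a > 0"
    unfolding a_def using assms by (smt (verit) exp_gt_zero mult_nonneg_nonneg)
  have "ennreal (erlang_density 1 1 c) * ennreal (exp (- \<mu> * exp (ln c - w)))
      = ennreal (c * exp (- a * c)) * indicator {0..} c" for c
  proof (cases "c > 0")
    case True
    then have "exp (- c) * exp (- \<mu> * exp (ln c - w)) = exp (- a * c)"
      by (simp add: a_def exp_diff exp_minus field_simps flip: exp_add)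
    then show ?thesis
      using True by (simp add: erlang_density_def ennreal_mult[symmetric] mult.assoc)
  qed (auto simp: erlang_density_def)
  then show ?thesis
    using nn_integral_mult_exp_neg_scaled[OF \<open>a > 0\<close>] by (simp add: a_def)
qed

text \<open>The value \<open>cws_a\<close> of a coordinate with log-weight \<open>lw\<close> is Gumbel distributed:
  \<open>exp (cws_a lw r c \<beta>)\<close> is exponential with rate \<open>exp lw\<close>.\<close>
lemma nn_integral_cws_a_greater:
  "(\<integral>\<^sup>+r. ennreal (erlang_density 1 1 r) * (\<integral>\<^sup>+\<beta>. indicator {0..1} \<beta> *
      (\<integral>\<^sup>+c. ennreal (erlang_density 1 1 c) * indicator {z<..} (cws_a lw r c \<beta>) \<partial>lborel) \<partial>lborel) \<partial>lborel)
   = ennreal (exp (- exp (z + lw)))"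
proof -
  define K where "K = exp (z + lw)"
  have "K > 0"
    by (simp add: K_def)
  define \<Phi> where "\<Phi> = (\<lambda>(x::real, y). ennreal ((1 + exp (z + (lw + y))) * exp (- exp (z + (lw + y)))))"
  have inner: "(\<integral>\<^sup>+c. ennreal (erlang_density 1 1 c) * indicator {z<..} (cws_a lw r c \<beta>) \<partial>lborel)
      = \<Phi> (cws_slack lw r \<beta>, r - cws_slack lw r \<beta>)" for r \<beta>
    unfolding cws_a_eq_slack \<Phi>_def diff_diff_eq by (simp add: nn_integral_gamma2_ln_greater del: One_nat_def)
  have "(\<integral>\<^sup>+r. ennreal (erlang_density 1 1 r) * (\<integral>\<^sup>+\<beta>. indicator {0..1} \<beta> *
      (\<integral>\<^sup>+c. ennreal (erlang_density 1 1 c) * indicator {z<..} (cws_a lw r c \<beta>) \<partial>lborel) \<partial>lborel) \<partial>lborel)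
      = (\<integral>\<^sup>+x. ennreal (exp (- x)) * indicator {0..} x *
            (\<integral>\<^sup>+y. ennreal (exp (- y)) * indicator {0..} y * \<Phi> (x, y) \<partial>lborel) \<partial>lborel)"
    unfolding inner by (rule nn_integral_gamma2_uniform_slack) (simp add: \<Phi>_def)
  also have "\<dots> = (\<integral>\<^sup>+x. ennreal (exp (- x)) * indicator {0..} x * ennreal (exp (- K)) \<partial>lborel)"
  proof (intro nn_integral_cong)
    fix x :: real
    have "(\<integral>\<^sup>+y. ennreal (exp (- y)) * indicator {0..} y * \<Phi> (x, y) \<partial>lborel)
       = (\<integral>\<^sup>+y. ennreal (exp (- y)) * indicator {0..} y * ennreal ((1 + K * exp y) * exp (- (K * exp y))) \<partial>lborel)"
      by (simp add: \<Phi>_def K_def exp_add mult_ac)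
    also have "\<dots> = ennreal (exp (- K))"
      by (rule nn_integral_exp_neg_gamma2_tail[OF \<open>K > 0\<close>])
    finally show "ennreal (exp (- x)) * indicator {0..} x *
          (\<integral>\<^sup>+y. ennreal (exp (- y)) * indicator {0..} y * \<Phi> (x, y) \<partial>lborel)
        = ennreal (exp (- x)) * indicator {0..} x * ennreal (exp (- K))"
      by simp
  qed
  also have "\<dots> = ennreal (exp (- K))"
    using nn_integral_exp_neg_atLeast[of 0] by (simp add: nn_integral_multc)
  finally show ?thesis
    by (simp add: K_def)
qed

lemma nn_integral_cws_slack_exp_cws_a:
  assumes L: "L \<ge> 0" and \<mu>: "\<mu> \<ge> 0"
  shows "(\<integral>\<^sup>+r. ennreal (erlang_density 1 1 r) * (\<integral>\<^sup>+\<beta>. indicator {0..1} \<beta> *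
      (\<integral>\<^sup>+c. ennreal (erlang_density 1 1 c) *
         (indicator {L..} (cws_slack lw r \<beta>) * ennreal (exp (- \<mu> * exp (cws_a lw r c \<beta>)))) \<partial>lborel) \<partial>lborel) \<partial>lborel)
   = ennreal (exp (- L) / (1 + \<mu> * exp (- lw)))"
proof -
  define \<kappa> where "\<kappa> = \<mu> * exp (- lw)"
  have "\<kappa> \<ge> 0"
    unfolding \<kappa>_def using \<mu> by simp
  define \<Phi> where "\<Phi> = (\<lambda>(x::real, y). indicator {L..} x * ennreal (1 / (1 + \<kappa> * exp (- y))^2))"
  have inner: "(\<integral>\<^sup>+c. ennreal (erlang_density 1 1 c) *
           (indicator {L..} (cws_slack lw r \<beta>) * ennreal (exp (- \<mu> * exp (cws_a lw r c \<beta>)))) \<partial>lborel)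
      = \<Phi> (cws_slack lw r \<beta>, r - cws_slack lw r \<beta>)" for r \<beta>
  proof -
    have "(\<integral>\<^sup>+c. ennreal (erlang_density 1 1 c) *
           (indicator {L..} (cws_slack lw r \<beta>) * ennreal (exp (- \<mu> * exp (cws_a lw r c \<beta>)))) \<partial>lborel)
        = indicator {L..} (cws_slack lw r \<beta>) * (\<integral>\<^sup>+c. ennreal (erlang_density 1 1 c) *
           ennreal (exp (- \<mu> * exp (ln c - (lw + (r - cws_slack lw r \<beta>))))) \<partial>lborel)"
      unfolding cws_a_eq_slack diff_diff_eq
      by (subst nn_integral_cmult[symmetric]) (simp_all add: mult.left_commute del: One_nat_def)
    also have "\<dots> = \<Phi> (cws_slack lw r \<beta>, r - cws_slack lw r \<beta>)"
      unfolding nn_integral_gamma2_laplace[OF \<mu>] by (simp add: \<Phi>_def \<kappa>_def exp_add exp_diff exp_minus field_simps)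
    finally show ?thesis .
  qed
  have "(\<integral>\<^sup>+r. ennreal (erlang_density 1 1 r) * (\<integral>\<^sup>+\<beta>. indicator {0..1} \<beta> *
      (\<integral>\<^sup>+c. ennreal (erlang_density 1 1 c) *
         (indicator {L..} (cws_slack lw r \<beta>) * ennreal (exp (- \<mu> * exp (cws_a lw r c \<beta>)))) \<partial>lborel) \<partial>lborel) \<partial>lborel)
      = (\<integral>\<^sup>+x. ennreal (exp (- x)) * indicator {0..} x *
            (\<integral>\<^sup>+y. ennreal (exp (- y)) * indicator {0..} y * \<Phi> (x, y) \<partial>lborel) \<partial>lborel)"
    unfolding inner by (rule nn_integral_gamma2_uniform_slack) (simp add: \<Phi>_def)
  also have "\<dots> = (\<integral>\<^sup>+x. ennreal (exp (- x)) * indicator {L..} x * ennreal (1 / (1 + \<kappa>)) \<partial>lborel)"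
  proof (intro nn_integral_cong)
    fix x :: real
    have "(\<integral>\<^sup>+y. ennreal (exp (- y)) * indicator {0..} y * \<Phi> (x, y) \<partial>lborel)
       = indicator {L..} x * (\<integral>\<^sup>+y. ennreal (exp (- y)) * indicator {0..} y *
            ennreal (1 / (1 + \<kappa> * exp (- y))^2) \<partial>lborel)"
      by (subst nn_integral_cmult[symmetric]) (simp_all add: \<Phi>_def mult_ac)
    also have "\<dots> = indicator {L..} x * ennreal (1 / (1 + \<kappa>))"
      by (simp add: nn_integral_exp_neg_div_square[OF \<open>\<kappa> \<ge> 0\<close>])
    finally show "ennreal (exp (- x)) * indicator {0..} x *
          (\<integral>\<^sup>+y. ennreal (exp (- y)) * indicator {0..} y * \<Phi> (x, y) \<partial>lborel)
        = ennreal (exp (- x)) * indicator {L..} x * ennreal (1 / (1 + \<kappa>))"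
      using L by (auto simp: indicator_def)
  qed
  also have "\<dots> = ennreal (exp (- L) / (1 + \<kappa>))"
    using \<open>\<kappa> \<ge> 0\<close> by (simp add: nn_integral_multc nn_integral_exp_neg_atLeast ennreal_mult'[symmetric] divide_inverse)
  finally show ?thesis
    by (simp add: \<kappa>_def)
qed

lemma (in prob_space) indep_var_restrict_compose:
  assumes "indep_vars M' X I" "A \<inter> B = {}" "A \<subseteq> I" "B \<subseteq> I"
    and "f \<in> Pi\<^sub>M A M' \<rightarrow>\<^sub>M N1" "g \<in> Pi\<^sub>M B M' \<rightarrow>\<^sub>M N2"
  shows "indep_var N1 (\<lambda>\<omega>. f (\<lambda>i\<in>A. X i \<omega>)) N2 (\<lambda>\<omega>. g (\<lambda>i\<in>B. X i \<omega>))"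
  using indep_var_compose[OF indep_var_restrict[OF assms(1-4)] assms(5,6)] by (simp add: comp_def)

lemma (in prob_space) indep_var_nn_integral:
  assumes ind: "indep_var S Y T Z" and [measurable]: "h \<in> borel_measurable (S \<Otimes>\<^sub>M T)"
  shows "(\<integral>\<^sup>+\<omega>. h (Y \<omega>, Z \<omega>) \<partial>M) = (\<integral>\<^sup>+\<omega>. \<integral>\<^sup>+\<omega>'. h (Y \<omega>, Z \<omega>') \<partial>M \<partial>M)"
proof -
  have [measurable]: "Y \<in> M \<rightarrow>\<^sub>M S" "Z \<in> M \<rightarrow>\<^sub>M T"
    using indep_var_rv1[OF ind] indep_var_rv2[OF ind] by auto
  interpret PZ: prob_space "distr M T Z"
    by (rule prob_space_distr) simp
  interpret pair_sigma_finite "distr M S Y" "distr M T Z"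
    by (intro pair_sigma_finite.intro prob_space_imp_sigma_finite prob_space_distr) simp_all
  have [measurable_cong]: "sets (distr M S Y \<Otimes>\<^sub>M distr M T Z) = sets (S \<Otimes>\<^sub>M T)"
    by (intro sets_pair_measure_cong) simp_all
  have "(\<integral>\<^sup>+\<omega>. h (Y \<omega>, Z \<omega>) \<partial>M) = (\<integral>\<^sup>+y. h y \<partial>distr M (S \<Otimes>\<^sub>M T) (\<lambda>\<omega>. (Y \<omega>, Z \<omega>)))"
    by (rule nn_integral_distr[symmetric]) simp_all
  also have "\<dots> = (\<integral>\<^sup>+y. h y \<partial>(distr M S Y \<Otimes>\<^sub>M distr M T Z))"
    using ind by (simp add: indep_var_distribution_eq)
  also have "\<dots> = (\<integral>\<^sup>+y1. \<integral>\<^sup>+y2. h (y1, y2) \<partial>distr M T Z \<partial>distr M S Y)"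
    by (rule PZ.nn_integral_fst[symmetric]) simp
  also have "\<dots> = (\<integral>\<^sup>+y1. \<integral>\<^sup>+\<omega>'. h (y1, Z \<omega>') \<partial>M \<partial>distr M S Y)"
    by (intro nn_integral_cong nn_integral_distr) (auto intro: measurable_Pair2)
  also have "\<dots> = (\<integral>\<^sup>+\<omega>. \<integral>\<^sup>+\<omega>'. h (Y \<omega>, Z \<omega>') \<partial>M \<partial>M)"
    by (rule nn_integral_distr) simp_all
  finally show ?thesis .
qed

lemma (in prob_space) indep_var_emeasure:
  assumes ind: "indep_var S Y T Z" and Q: "Q \<in> sets (S \<Otimes>\<^sub>M T)"
  shows "emeasure M {\<omega> \<in> space M. (Y \<omega>, Z \<omega>) \<in> Q}
       = (\<integral>\<^sup>+\<omega>. emeasure M {\<omega>' \<in> space M. (Y \<omega>, Z \<omega>') \<in> Q} \<partial>M)"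
proof -
  have [measurable]: "Y \<in> M \<rightarrow>\<^sub>M S" "Z \<in> M \<rightarrow>\<^sub>M T"
    using indep_var_rv1[OF ind] indep_var_rv2[OF ind] by auto
  have "{\<omega> \<in> space M. (Y \<omega>, Z \<omega>) \<in> Q} \<in> sets M"
    using Q by measurable
  then have "emeasure M {\<omega> \<in> space M. (Y \<omega>, Z \<omega>) \<in> Q} = (\<integral>\<^sup>+\<omega>. indicator {\<omega> \<in> space M. (Y \<omega>, Z \<omega>) \<in> Q} \<omega> \<partial>M)"
    by simp
  also have "\<dots> = (\<integral>\<^sup>+\<omega>. indicator Q (Y \<omega>, Z \<omega>) \<partial>M)"
    by (intro nn_integral_cong) (simp add: indicator_def)
  also have "\<dots> = (\<integral>\<^sup>+\<omega>. \<integral>\<^sup>+\<omega>'. indicator Q (Y \<omega>, Z \<omega>') \<partial>M \<partial>M)"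
    using Q by (intro indep_var_nn_integral[OF ind]) simp
  also have "\<dots> = (\<integral>\<^sup>+\<omega>. emeasure M {\<omega>' \<in> space M. (Y \<omega>, Z \<omega>') \<in> Q} \<partial>M)"
  proof (intro nn_integral_cong)
    fix \<omega> assume "\<omega> \<in> space M"
    then have "(\<lambda>\<omega>'. (Y \<omega>, Z \<omega>')) \<in> M \<rightarrow>\<^sub>M S \<Otimes>\<^sub>M T"
      by (auto intro!: measurable_Pair measurable_const)
    then have "{\<omega>' \<in> space M. (Y \<omega>, Z \<omega>') \<in> Q} \<in> sets M"
      using Q by (auto dest: measurable_sets)
    then have "emeasure M {\<omega>' \<in> space M. (Y \<omega>, Z \<omega>') \<in> Q}
        = (\<integral>\<^sup>+\<omega>'. indicator {\<omega>' \<in> space M. (Y \<omega>, Z \<omega>') \<in> Q} \<omega>' \<partial>M)"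
      by simp
    also have "\<dots> = (\<integral>\<^sup>+\<omega>'. indicator Q (Y \<omega>, Z \<omega>') \<partial>M)"
      by (intro nn_integral_cong) (simp add: indicator_def)
    finally show "(\<integral>\<^sup>+\<omega>'. indicator Q (Y \<omega>, Z \<omega>') \<partial>M) = emeasure M {\<omega>' \<in> space M. (Y \<omega>, Z \<omega>') \<in> Q}"
      by simp
  qed
  finally show ?thesis .
qed

lemma (in prob_space) prob_indep_uniform_eq:
  fixes Y :: "'i \<Rightarrow> 'a \<Rightarrow> real" and n :: nat
  assumes ind: "indep_vars (\<lambda>_. borel) Y I" and ij: "i \<in> I" "j \<in> I" "i \<noteq> j" and "n > 0"
    and uniform: "\<And>k m. k \<in> {i, j} \<Longrightarrow> m < n \<Longrightarrow> prob {\<omega> \<in> space M. Y k \<omega> = real m} = 1 / n"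
  shows "prob {\<omega> \<in> space M. Y i \<omega> = Y j \<omega>} = 1 / n"
proof -
  have [measurable]: "Y i \<in> borel_measurable M" "Y j \<in> borel_measurable M"
    using ind ij by (auto simp: indep_vars_def)
  define U where "U = (\<Union>m<n. {\<omega> \<in> space M. Y i \<omega> = real m \<and> Y j \<omega> = real m})"
  have "prob (\<Union>m<n. {\<omega> \<in> space M. Y i \<omega> = real m}) = (\<Sum>m<n. prob {\<omega> \<in> space M. Y i \<omega> = real m})"
    by (intro finite_measure_finite_Union) (auto simp: disjoint_family_on_def)
  also have "\<dots> = 1"
    using uniform[of i] \<open>n > 0\<close> by simp
  finally have "AE \<omega> in M. \<omega> \<in> (\<Union>m<n. {\<omega> \<in> space M. Y i \<omega> = real m})"
    by (rule AE_prob_1)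
  then have "AE \<omega> in M. Y i \<omega> = Y j \<omega> \<longleftrightarrow> \<omega> \<in> U"
    by (rule eventually_mono) (auto simp: U_def)
  then have "prob {\<omega> \<in> space M. Y i \<omega> = Y j \<omega>} = prob U"
    by (intro measure_eq_AE) (auto simp: U_def)
  also have "\<dots> = (\<Sum>m<n. prob {\<omega> \<in> space M. Y i \<omega> = real m \<and> Y j \<omega> = real m})"
    unfolding U_def by (intro finite_measure_finite_Union) (auto simp: disjoint_family_on_def)
  also have "\<dots> = (\<Sum>m<n. 1 / n * (1 / n))"
  proof (intro sum.cong refl)
    fix m assume "m \<in> {..<n}"
    have "prob (\<Inter>k\<in>{i, j}. Y k -` {real m} \<inter> space M) = (\<Prod>k\<in>{i, j}. prob (Y k -` {real m} \<inter> space M))"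
      using ij by (intro indep_varsD[OF ind]) auto
    moreover have "(\<Inter>k\<in>{i, j}. Y k -` {real m} \<inter> space M) = {\<omega> \<in> space M. Y i \<omega> = real m \<and> Y j \<omega> = real m}"
      by auto
    moreover have "prob (Y k -` {real m} \<inter> space M) = 1 / n" if "k \<in> {i, j}" for k
      using uniform[OF that, of m] \<open>m \<in> {..<n}\<close> by (simp add: vimage_def Int_def conj_commute)
    ultimately show "prob {\<omega> \<in> space M. Y i \<omega> = real m \<and> Y j \<omega> = real m} = 1 / n * (1 / n)"
      using ij by simp
  qed
  also have "\<dots> = 1 / n"
    using \<open>n > 0\<close> by (simp add: power2_eq_square)
  finally show ?thesis .
qed

section \<open>The race between coordinates\<close>

definition sample_a :: "(nat \<Rightarrow> real) \<Rightarrow> (rv_idx \<Rightarrow> real) \<Rightarrow> nat \<Rightarrow> real" where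
  "sample_a lw y j = cws_a (lw j) (y (RI j)) (y (CI j)) (y (BI j))"

definition sample_slack :: "(nat \<Rightarrow> real) \<Rightarrow> (rv_idx \<Rightarrow> real) \<Rightarrow> nat \<Rightarrow> real" where
  "sample_slack lw y j = cws_slack (lw j) (y (RI j)) (y (BI j))"

lemma measurable_sample_a:
  "{RI j, CI j, BI j} \<subseteq> I \<Longrightarrow> (\<lambda>y. sample_a lw y j) \<in> Pi\<^sub>M I (\<lambda>_. borel) \<rightarrow>\<^sub>M borel"
  unfolding sample_a_def by measurable

lemma measurable_sample_slack:
  "{RI j, BI j} \<subseteq> I \<Longrightarrow> (\<lambda>y. sample_slack lw y j) \<in> Pi\<^sub>M I (\<lambda>_. borel) \<rightarrow>\<^sub>M borel"
  unfolding sample_slack_def by measurable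

lemma sample_a_restrict: "{RI j, CI j, BI j} \<subseteq> I \<Longrightarrow> sample_a lw (restrict y I) j = sample_a lw y j"
  by (simp add: sample_a_def)

lemma sample_slack_restrict: "{RI j, BI j} \<subseteq> I \<Longrightarrow> sample_slack lw (restrict y I) j = sample_slack lw y j"
  by (simp add: sample_slack_def)

lemma sets_sample_race:
  assumes "finite Os" "{RI k, CI k, BI k} \<subseteq> A" "\<And>j. j \<in> Os \<Longrightarrow> {RI j, CI j, BI j} \<subseteq> B"
  shows "{y \<in> space (Pi\<^sub>M A (\<lambda>_. borel) \<Otimes>\<^sub>M Pi\<^sub>M B (\<lambda>_. borel)).
      (\<forall>j\<in>Os. sample_a lw (fst y) k < sample_a lw (snd y) j) \<and> L \<le> sample_slack lw (fst y) k}
    \<in> sets (Pi\<^sub>M A (\<lambda>_. borel) \<Otimes>\<^sub>M Pi\<^sub>M B (\<lambda>_. borel))"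
proof (intro sets.sets_Collect_conj sets.sets_Collect_finite_All \<open>finite Os\<close>)
  have [measurable]: "(\<lambda>y. sample_a lw y k) \<in> Pi\<^sub>M A (\<lambda>_. borel) \<rightarrow>\<^sub>M borel"
    using assms(2) by (intro measurable_sample_a)
  fix j assume "j \<in> Os"
  then have [measurable]: "(\<lambda>y. sample_a lw y j) \<in> Pi\<^sub>M B (\<lambda>_. borel) \<rightarrow>\<^sub>M borel"
    using assms(3) by (intro measurable_sample_a) auto
  show "{y \<in> space (Pi\<^sub>M A (\<lambda>_. borel) \<Otimes>\<^sub>M Pi\<^sub>M B (\<lambda>_. borel)). sample_a lw (fst y) k < sample_a lw (snd y) j}
      \<in> sets (Pi\<^sub>M A (\<lambda>_. borel) \<Otimes>\<^sub>M Pi\<^sub>M B (\<lambda>_. borel))"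
    by measurable
next
  have [measurable]: "(\<lambda>y. sample_slack lw y k) \<in> Pi\<^sub>M A (\<lambda>_. borel) \<rightarrow>\<^sub>M borel"
    using assms(2) by (intro measurable_sample_slack) auto
  show "{y \<in> space (Pi\<^sub>M A (\<lambda>_. borel) \<Otimes>\<^sub>M Pi\<^sub>M B (\<lambda>_. borel)). L \<le> sample_slack lw (fst y) k}
      \<in> sets (Pi\<^sub>M A (\<lambda>_. borel) \<Otimes>\<^sub>M Pi\<^sub>M B (\<lambda>_. borel))"
    by measurable
qed

locale gcws_randomness = prob_space M for M :: "'w measure" +
  fixes X :: "rv_idx \<Rightarrow> 'w \<Rightarrow> real" and D :: nat
  assumes indep: "indep_vars (\<lambda>_. borel) X (rv_indices D)"
    and gamma_r: "\<And>k. k < 2 * D \<Longrightarrow> distributed M lborel (X (RI k)) (\<lambda>x. ennreal (erlang_density 1 1 x))"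
    and gamma_c: "\<And>k. k < 2 * D \<Longrightarrow> distributed M lborel (X (CI k)) (\<lambda>x. ennreal (erlang_density 1 1 x))"
    and uniform_beta: "\<And>k. k < 2 * D \<Longrightarrow> distributed M lborel (X (BI k)) (\<lambda>x. indicator {0..1} x)"
begin

lemma measurable_coordinates [measurable]:
  assumes "k < 2 * D"
  shows "X (RI k) \<in> borel_measurable M" "X (CI k) \<in> borel_measurable M" "X (BI k) \<in> borel_measurable M"
  using assms indep by (auto simp: indep_vars_def rv_indices_def)

lemma nn_integral_coordinate:
  fixes g :: "real \<times> real \<times> real \<Rightarrow> ennreal"
  assumes k: "k < 2 * D" and [measurable]: "g \<in> borel_measurable (borel \<Otimes>\<^sub>M (borel \<Otimes>\<^sub>M borel))"
  shows "(\<integral>\<^sup>+\<omega>. g (X (RI k) \<omega>, X (BI k) \<omega>, X (CI k) \<omega>) \<partial>M)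
       = (\<integral>\<^sup>+r. ennreal (erlang_density 1 1 r) * (\<integral>\<^sup>+\<beta>. indicator {0..1} \<beta> *
            (\<integral>\<^sup>+c. ennreal (erlang_density 1 1 c) * g (r, \<beta>, c) \<partial>lborel) \<partial>lborel) \<partial>lborel)"
proof -
  have sub: "{RI k} \<subseteq> rv_indices D" "{BI k, CI k} \<subseteq> rv_indices D" "{BI k} \<subseteq> rv_indices D" "{CI k} \<subseteq> rv_indices D"
    using k by (auto simp: rv_indices_def)
  have indep_R: "indep_var (Pi\<^sub>M {RI k} (\<lambda>_. borel)) (\<lambda>\<omega>. \<lambda>i\<in>{RI k}. X i \<omega>)
      (Pi\<^sub>M {BI k, CI k} (\<lambda>_. borel)) (\<lambda>\<omega>. \<lambda>i\<in>{BI k, CI k}. X i \<omega>)"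
    by (rule indep_var_restrict[OF indep _ sub(1,2)]) simp
  have indep_B: "indep_var borel (X (BI k)) borel (X (CI k))"
    using indep_var_restrict_compose[OF indep _ sub(3,4), of "\<lambda>y. y (BI k)" borel "\<lambda>y. y (CI k)" borel]
    by simp
  have "(\<integral>\<^sup>+\<omega>. g (X (RI k) \<omega>, X (BI k) \<omega>, X (CI k) \<omega>) \<partial>M)
      = (\<integral>\<^sup>+\<omega>. \<integral>\<^sup>+\<omega>'. g (X (RI k) \<omega>, X (BI k) \<omega>', X (CI k) \<omega>') \<partial>M \<partial>M)"
    using indep_var_nn_integral[OF indep_R, of "\<lambda>(y1, y2). g (y1 (RI k), y2 (BI k), y2 (CI k))"] by simp
  also have "\<dots> = (\<integral>\<^sup>+\<omega>. \<integral>\<^sup>+\<omega>'. \<integral>\<^sup>+\<omega>''. g (X (RI k) \<omega>, X (BI k) \<omega>', X (CI k) \<omega>'') \<partial>M \<partial>M \<partial>M)"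
    using indep_var_nn_integral[OF indep_B, of "\<lambda>(\<beta>, c). g (_, \<beta>, c)"] by simp
  also have "\<dots> = (\<integral>\<^sup>+\<omega>. \<integral>\<^sup>+\<omega>'. \<integral>\<^sup>+c. ennreal (erlang_density 1 1 c) * g (X (RI k) \<omega>, X (BI k) \<omega>', c) \<partial>lborel \<partial>M \<partial>M)"
    by (intro nn_integral_cong distributed_nn_integral[OF gamma_c[OF k], symmetric]) simp
  also have "\<dots> = (\<integral>\<^sup>+\<omega>. \<integral>\<^sup>+\<beta>. indicator {0..1} \<beta> *
      (\<integral>\<^sup>+c. ennreal (erlang_density 1 1 c) * g (X (RI k) \<omega>, \<beta>, c) \<partial>lborel) \<partial>lborel \<partial>M)"
    by (intro nn_integral_cong distributed_nn_integral[OF uniform_beta[OF k], symmetric,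
          of "\<lambda>\<beta>. \<integral>\<^sup>+c. ennreal (erlang_density 1 1 c) * g (_, \<beta>, c) \<partial>lborel"]) measurable
  also have "\<dots> = (\<integral>\<^sup>+r. ennreal (erlang_density 1 1 r) * (\<integral>\<^sup>+\<beta>. indicator {0..1} \<beta> *
            (\<integral>\<^sup>+c. ennreal (erlang_density 1 1 c) * g (r, \<beta>, c) \<partial>lborel) \<partial>lborel) \<partial>lborel)"
    by (rule distributed_nn_integral[OF gamma_r[OF k], symmetric,
          of "\<lambda>r. \<integral>\<^sup>+\<beta>. indicator {0..1} \<beta> * (\<integral>\<^sup>+c. ennreal (erlang_density 1 1 c) * g (r, \<beta>, c) \<partial>lborel) \<partial>lborel"])
       measurable
  finally show ?thesis .
qed

abbreviation sample :: "'w \<Rightarrow> rv_idx \<Rightarrow> real" where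
  "sample \<omega> \<equiv> \<lambda>i. X i \<omega>"

abbreviation cws_sample :: "real \<Rightarrow> (nat \<Rightarrow> real) \<Rightarrow> 'w \<Rightarrow> nat \<times> int" where
  "cws_sample p s \<omega> \<equiv> cws (2 * D) p s (\<lambda>k. X (RI k) \<omega>) (\<lambda>k. X (CI k) \<omega>) (\<lambda>k. X (BI k) \<omega>)"

lemma measurable_sample_a_X: "j < 2 * D \<Longrightarrow> (\<lambda>\<omega>. sample_a lw (sample \<omega>) j) \<in> borel_measurable M"
  unfolding sample_a_def by measurable

lemma measurable_sample_slack_X: "j < 2 * D \<Longrightarrow> (\<lambda>\<omega>. sample_slack lw (sample \<omega>) j) \<in> borel_measurable M"
  unfolding sample_slack_def by measurable

lemma emeasure_sample_a_greater:
  assumes j: "j < 2 * D"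
  shows "emeasure M {\<omega> \<in> space M. z < sample_a lw (sample \<omega>) j} = ennreal (exp (- exp (z + lw j)))"
proof -
  note [measurable] = measurable_sample_a_X[OF j]
  have "{\<omega> \<in> space M. z < sample_a lw (sample \<omega>) j} \<in> sets M"
    by measurable
  then have "emeasure M {\<omega> \<in> space M. z < sample_a lw (sample \<omega>) j}
      = (\<integral>\<^sup>+\<omega>. indicator {\<omega> \<in> space M. z < sample_a lw (sample \<omega>) j} \<omega> \<partial>M)"
    by simp
  also have "\<dots> = (\<integral>\<^sup>+\<omega>. indicator {z<..} (cws_a (lw j) (X (RI j) \<omega>) (X (CI j) \<omega>) (X (BI j) \<omega>)) \<partial>M)"
    by (intro nn_integral_cong) (simp add: sample_a_def indicator_def)
  also have "\<dots> = (\<integral>\<^sup>+r. ennreal (erlang_density 1 1 r) * (\<integral>\<^sup>+\<beta>. indicator {0..1} \<beta> *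
      (\<integral>\<^sup>+c. ennreal (erlang_density 1 1 c) * indicator {z<..} (cws_a (lw j) r c \<beta>) \<partial>lborel) \<partial>lborel) \<partial>lborel)"
    using nn_integral_coordinate[OF j, of "\<lambda>(r, \<beta>, c). indicator {z<..} (cws_a (lw j) r c \<beta>)"] by simp
  also have "\<dots> = ennreal (exp (- exp (z + lw j)))"
    by (rule nn_integral_cws_a_greater)
  finally show ?thesis .
qed

lemma nn_integral_sample_slack_exp_sample_a:
  assumes j: "j < 2 * D" and "L \<ge> 0" "\<mu> \<ge> 0"
  shows "(\<integral>\<^sup>+\<omega>. indicator {L..} (sample_slack lw (sample \<omega>) j) *
            ennreal (exp (- \<mu> * exp (sample_a lw (sample \<omega>) j))) \<partial>M)
       = ennreal (exp (- L) / (1 + \<mu> * exp (- lw j)))"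
proof -
  have "(\<integral>\<^sup>+\<omega>. indicator {L..} (sample_slack lw (sample \<omega>) j) *
            ennreal (exp (- \<mu> * exp (sample_a lw (sample \<omega>) j))) \<partial>M)
      = (\<integral>\<^sup>+r. ennreal (erlang_density 1 1 r) * (\<integral>\<^sup>+\<beta>. indicator {0..1} \<beta> *
          (\<integral>\<^sup>+c. ennreal (erlang_density 1 1 c) * (indicator {L..} (cws_slack (lw j) r \<beta>) *
             ennreal (exp (- \<mu> * exp (cws_a (lw j) r c \<beta>)))) \<partial>lborel) \<partial>lborel) \<partial>lborel)"
    using nn_integral_coordinate[OF j, of "\<lambda>(r, \<beta>, c).
        indicator {L..} (cws_slack (lw j) r \<beta>) * ennreal (exp (- \<mu> * exp (cws_a (lw j) r c \<beta>)))"]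
    by (simp add: sample_a_def sample_slack_def)
  also have "\<dots> = ennreal (exp (- L) / (1 + \<mu> * exp (- lw j)))"
    by (rule nn_integral_cws_slack_exp_cws_a[OF assms(2,3)])
  finally show ?thesis .
qed

lemma emeasure_all_sample_a_greater:
  assumes Os: "Os \<subseteq> {..<2 * D}"
  shows "emeasure M {\<omega> \<in> space M. \<forall>j\<in>Os. z < sample_a lw (sample \<omega>) j}
       = ennreal (exp (- (exp z * (\<Sum>j\<in>Os. exp (lw j)))))"
proof (cases "Os = {}")
  case True
  then show ?thesis
    by (simp add: emeasure_space_1)
next
  case False
  have "finite Os"
    using Os finite_subset by blast
  define K where "K j = {RI j, CI j, BI j}" for j
  have "indep_vars (\<lambda>j. Pi\<^sub>M (K j) (\<lambda>_. borel)) (\<lambda>j \<omega>. \<lambda>i\<in>K j. X i \<omega>) Os"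
    using Os by (intro indep_vars_restrict[OF indep]) (auto simp: K_def rv_indices_def disjoint_family_on_def)
  then have "indep_vars (\<lambda>_. borel) (\<lambda>j \<omega>. sample_a lw (\<lambda>i\<in>K j. X i \<omega>) j) Os"
    by (rule indep_vars_compose2) (auto simp: K_def intro: measurable_sample_a)
  then have indep_a: "indep_vars (\<lambda>_. borel) (\<lambda>j \<omega>. sample_a lw (sample \<omega>) j) Os"
    by (simp add: K_def sample_a_restrict)
  have "{\<omega> \<in> space M. \<forall>j\<in>Os. z < sample_a lw (sample \<omega>) j}
      = (\<Inter>j\<in>Os. (\<lambda>\<omega>. sample_a lw (sample \<omega>) j) -` {z<..} \<inter> space M)"
    using False by auto
  also have "prob \<dots> = (\<Prod>j\<in>Os. prob ((\<lambda>\<omega>. sample_a lw (sample \<omega>) j) -` {z<..} \<inter> space M))"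
    using False \<open>finite Os\<close> by (intro indep_varsD[OF indep_a]) auto
  also have "\<dots> = (\<Prod>j\<in>Os. exp (- exp (z + lw j)))"
  proof (intro prod.cong refl)
    fix j assume "j \<in> Os"
    then have "emeasure M ((\<lambda>\<omega>. sample_a lw (sample \<omega>) j) -` {z<..} \<inter> space M) = ennreal (exp (- exp (z + lw j)))"
      using Os emeasure_sample_a_greater[of j z lw] by (auto simp: vimage_def Int_def conj_commute)
    then show "prob ((\<lambda>\<omega>. sample_a lw (sample \<omega>) j) -` {z<..} \<inter> space M) = exp (- exp (z + lw j))"
      by (simp add: emeasure_eq_measure)
  qed
  also have "\<dots> = exp (- (exp z * (\<Sum>j\<in>Os. exp (lw j))))"
    by (simp add: exp_sum[symmetric] sum_negf sum_distrib_left exp_add \<open>finite Os\<close>)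
  finally show ?thesis
    by (simp add: emeasure_eq_measure)
qed

definition race_event :: "(nat \<Rightarrow> real) \<Rightarrow> nat set \<Rightarrow> nat \<Rightarrow> real \<Rightarrow> 'w set" where
  "race_event lw K k L = {\<omega> \<in> space M.
     (\<forall>j\<in>K - {k}. sample_a lw (sample \<omega>) k < sample_a lw (sample \<omega>) j) \<and> L \<le> sample_slack lw (sample \<omega>) k}"

text \<open>Condition on the random numbers of coordinate \<open>k\<close>: the values \<open>sample_a\<close> of the other
  coordinates are independent of them, so they all exceed \<open>sample_a lw _ k\<close> with a probability
  given by \<open>emeasure_all_sample_a_greater\<close>.\<close>
lemma emeasure_race_event:
  assumes K: "K \<subseteq> {..<2 * D}" and k: "k \<in> K" and L: "L \<ge> 0"
  shows "emeasure M (race_event lw K k L) = ennreal (exp (- L) * exp (lw k) / (\<Sum>j\<in>K. exp (lw j)))"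
proof -
  define Os where "Os = K - {k}"
  define A where "A = {RI k, CI k, BI k}"
  define B where "B = (\<Union>j\<in>Os. {RI j, CI j, BI j})"
  define \<mu> where "\<mu> = (\<Sum>j\<in>Os. exp (lw j))"
  let ?S = "Pi\<^sub>M A (\<lambda>_. borel :: real measure)" and ?T = "Pi\<^sub>M B (\<lambda>_. borel :: real measure)"
  have "finite Os" "Os \<subseteq> {..<2 * D}" "k < 2 * D"
    using K k finite_subset[OF K] by (auto simp: Os_def)
  have iv: "indep_var ?S (\<lambda>\<omega>. restrict (sample \<omega>) A) ?T (\<lambda>\<omega>. restrict (sample \<omega>) B)"
    using K k by (intro indep_var_restrict[OF indep]) (auto simp: A_def B_def Os_def rv_indices_def)
  define Q where "Q = {y \<in> space (?S \<Otimes>\<^sub>M ?T).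
      (\<forall>j\<in>Os. sample_a lw (fst y) k < sample_a lw (snd y) j) \<and> L \<le> sample_slack lw (fst y) k}"
  have Q: "Q \<in> sets (?S \<Otimes>\<^sub>M ?T)"
    unfolding Q_def using \<open>finite Os\<close> by (rule sets_sample_race) (auto simp: A_def B_def)
  have restrict_A: "sample_a lw (restrict y A) k = sample_a lw y k"
    "sample_slack lw (restrict y A) k = sample_slack lw y k" for y
    by (simp_all add: A_def sample_a_restrict sample_slack_restrict)
  have restrict_B: "sample_a lw (restrict y B) j = sample_a lw y j" if "j \<in> Os" for y j
    using that by (intro sample_a_restrict) (auto simp: B_def)
  have "race_event lw K k L = {\<omega> \<in> space M. (restrict (sample \<omega>) A, restrict (sample \<omega>) B) \<in> Q}"
    by (auto simp: race_event_def Q_def Os_def space_pair_measure space_PiM restrict_A restrict_B)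
  then have "emeasure M (race_event lw K k L)
      = (\<integral>\<^sup>+\<omega>. emeasure M {\<omega>' \<in> space M. (restrict (sample \<omega>) A, restrict (sample \<omega>') B) \<in> Q} \<partial>M)"
    by (simp add: indep_var_emeasure[OF iv Q])
  also have "\<dots> = (\<integral>\<^sup>+\<omega>. indicator {L..} (sample_slack lw (sample \<omega>) k) *
      ennreal (exp (- \<mu> * exp (sample_a lw (sample \<omega>) k))) \<partial>M)"
  proof (intro nn_integral_cong)
    fix \<omega>
    have "{\<omega>' \<in> space M. (restrict (sample \<omega>) A, restrict (sample \<omega>') B) \<in> Q}
        = (if L \<le> sample_slack lw (sample \<omega>) k
           then {\<omega>' \<in> space M. \<forall>j\<in>Os. sample_a lw (sample \<omega>) k < sample_a lw (sample \<omega>') j} else {})"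
      by (auto simp: Q_def space_pair_measure space_PiM restrict_A restrict_B)
    also have "emeasure M \<dots> = indicator {L..} (sample_slack lw (sample \<omega>) k) *
        ennreal (exp (- \<mu> * exp (sample_a lw (sample \<omega>) k)))"
      using emeasure_all_sample_a_greater[OF \<open>Os \<subseteq> {..<2 * D}\<close>] by (simp add: \<mu>_def mult.commute)
    finally show "emeasure M {\<omega>' \<in> space M. (restrict (sample \<omega>) A, restrict (sample \<omega>') B) \<in> Q}
        = indicator {L..} (sample_slack lw (sample \<omega>) k) * ennreal (exp (- \<mu> * exp (sample_a lw (sample \<omega>) k)))" .
  qed
  also have "\<dots> = ennreal (exp (- L) / (1 + \<mu> * exp (- lw k)))"
    using \<open>k < 2 * D\<close> L by (rule nn_integral_sample_slack_exp_sample_a) (simp add: \<mu>_def sum_nonneg)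
  also have "exp (- L) / (1 + \<mu> * exp (- lw k)) = exp (- L) * exp (lw k) / (\<Sum>j\<in>K. exp (lw j))"
    using k \<open>finite Os\<close> by (simp add: \<mu>_def Os_def sum.remove[of K k] finite_subset[OF K] exp_minus field_simps)
  finally show ?thesis .
qed

lemma race_event_sets:
  assumes "K \<subseteq> {..<2 * D}" "k \<in> K"
  shows "race_event lw K k L \<in> sets M"
  unfolding race_event_def
proof (intro sets.sets_Collect_conj sets.sets_Collect_finite_All)
  have "k < 2 * D"
    using assms by auto
  note [measurable] = measurable_sample_a_X[OF this] measurable_sample_slack_X[OF this]
  fix j assume "j \<in> K - {k}"
  then have [measurable]: "(\<lambda>\<omega>. sample_a lw (sample \<omega>) j) \<in> borel_measurable M"
    using assms by (intro measurable_sample_a_X) auto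
  show "{\<omega> \<in> space M. sample_a lw (sample \<omega>) k < sample_a lw (sample \<omega>) j} \<in> sets M"
    by measurable
next
  have "k < 2 * D"
    using assms by auto
  note [measurable] = measurable_sample_slack_X[OF this]
  show "{\<omega> \<in> space M. L \<le> sample_slack lw (sample \<omega>) k} \<in> sets M"
    by measurable
qed (use assms in \<open>auto intro: finite_subset\<close>)

lemma race_event_disjoint:
  assumes "k \<in> K" "k' \<in> K" "k \<noteq> k'"
  shows "race_event lw K k L \<inter> race_event lw K k' L' = {}"
proof -
  have False if "\<omega> \<in> race_event lw K k L" "\<omega> \<in> race_event lw K k' L'" for \<omega>
  proof -
    have "sample_a lw (sample \<omega>) k < sample_a lw (sample \<omega>) k'" "sample_a lw (sample \<omega>) k' < sample_a lw (sample \<omega>) k"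
      using that assms by (auto simp: race_event_def)
    then show False
      by simp
  qed
  then show ?thesis
    by blast
qed

lemma AE_race_winner:
  assumes K: "K \<subseteq> {..<2 * D}" "K \<noteq> {}"
  shows "AE \<omega> in M. \<exists>k\<in>K. \<omega> \<in> race_event lw K k 0"
proof -
  have "finite K"
    using K finite_subset by blast
  then have "(\<Sum>j\<in>K. exp (lw j)) > 0"
    using K by (intro sum_pos) auto
  have "prob (\<Union>k\<in>K. race_event lw K k 0) = (\<Sum>k\<in>K. prob (race_event lw K k 0))"
    using \<open>finite K\<close> K race_event_sets race_event_disjoint
    by (intro finite_measure_finite_Union) (auto simp: disjoint_family_on_def)
  also have "\<dots> = (\<Sum>k\<in>K. exp (lw k) / (\<Sum>j\<in>K. exp (lw j)))"
    using K by (intro sum.cong refl) (simp add: measure_def emeasure_race_event sum_nonneg)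
  also have "\<dots> = 1"
    using \<open>(\<Sum>j\<in>K. exp (lw j)) > 0\<close> by (simp add: sum_divide_distrib[symmetric])
  finally have "AE \<omega> in M. \<omega> \<in> (\<Union>k\<in>K. race_event lw K k 0)"
    by (rule AE_prob_1)
  then show ?thesis
    by auto
qed

lemma AE_gamma_r_pos: "AE \<omega> in M. \<forall>k<2 * D. 0 < X (RI k) \<omega>"
proof -
  have "AE \<omega> in M. 0 < X (RI k) \<omega>" if k: "k < 2 * D" for k
  proof -
    have "emeasure M (X (RI k) -` {..0} \<inter> space M) = (\<integral>\<^sup>+x. ennreal (erlang_density 1 1 x) * indicator {..0} x \<partial>lborel)"
      by (rule distributed_emeasure[OF gamma_r[OF k]]) simp
    also have "\<dots> = 0"
      by (intro nn_integral_zero') (auto simp: indicator_def erlang_density_def)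
    finally have "X (RI k) -` {..0} \<inter> space M \<in> null_sets M"
      using k by (auto intro: null_setsI)
    then show ?thesis
      by (rule AE_I') auto
  qed
  then have "AE \<omega> in M. \<forall>k\<in>{..<2 * D}. 0 < X (RI k) \<omega>"
    by (intro AE_finite_allI) auto
  then show ?thesis
    by auto
qed

lemma AE_cws_eq_iff_race_event:
  fixes p :: real and S T W L :: "nat \<Rightarrow> real"
  defines "W \<equiv> \<lambda>k. max (S k) (T k)"
  defines "L \<equiv> \<lambda>k. p * ln (W k) - p * ln (min (S k) (T k))"
  assumes p: "p > 0" and S: "\<And>k. 0 \<le> S k" and T: "\<And>k. 0 \<le> T k"
    and suppS: "\<exists>k<2 * D. 0 < S k" and suppT: "\<exists>k<2 * D. 0 < T k"
  shows "AE \<omega> in M. cws_sample p S \<omega> = cws_sample p T \<omega> \<longleftrightarrow>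
    (\<exists>k\<in>{k. k < 2 * D \<and> 0 < S k \<and> 0 < T k}.
       \<omega> \<in> race_event (\<lambda>k. p * ln (W k)) {k. k < 2 * D \<and> 0 < W k} k (L k))"
proof -
  let ?lw = "\<lambda>k. p * ln (W k)" and ?Kw = "{k. k < 2 * D \<and> 0 < W k}"
  have "AE \<omega> in M. \<exists>k\<in>?Kw. \<omega> \<in> race_event ?lw ?Kw k 0"
    using suppS by (intro AE_race_winner) (auto simp: W_def)
  with AE_gamma_r_pos show ?thesis
  proof eventually_elim
    case (elim \<omega>)
    then obtain k0 where k0: "k0 \<in> ?Kw" "\<omega> \<in> race_event ?lw ?Kw k0 0"
      by blast
    have wins: "\<And>j. j < 2 * D \<Longrightarrow> 0 < W j \<Longrightarrow> j \<noteq> k0 \<Longrightarrow>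
        cws_a (?lw k0) (X (RI k0) \<omega>) (X (CI k0) \<omega>) (X (BI k0) \<omega>) < cws_a (?lw j) (X (RI j) \<omega>) (X (CI j) \<omega>) (X (BI j) \<omega>)"
      using k0(2) by (auto simp: race_event_def sample_a_def)
    have "cws_sample p S \<omega> = cws_sample p T \<omega> \<longleftrightarrow>
      0 < S k0 \<and> 0 < T k0 \<and> L k0 \<le> sample_slack ?lw (sample \<omega>) k0"
      unfolding L_def sample_slack_def W_def
      by (rule cws_eq_iff[OF p S T suppS suppT]) (use elim k0 wins in \<open>auto simp: W_def\<close>)
    also have "\<dots> \<longleftrightarrow> (\<exists>k\<in>{k. k < 2 * D \<and> 0 < S k \<and> 0 < T k}. \<omega> \<in> race_event ?lw ?Kw k (L k))"
    proof
      assume "0 < S k0 \<and> 0 < T k0 \<and> L k0 \<le> sample_slack ?lw (sample \<omega>) k0"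
      then show "\<exists>k\<in>{k. k < 2 * D \<and> 0 < S k \<and> 0 < T k}. \<omega> \<in> race_event ?lw ?Kw k (L k)"
        using k0 by (intro bexI[of _ k0]) (auto simp: race_event_def)
    next
      assume "\<exists>k\<in>{k. k < 2 * D \<and> 0 < S k \<and> 0 < T k}. \<omega> \<in> race_event ?lw ?Kw k (L k)"
      then obtain k where k: "k < 2 * D" "0 < S k" "0 < T k" "\<omega> \<in> race_event ?lw ?Kw k (L k)"
        by blast
      then have "k \<in> ?Kw"
        by (auto simp: W_def)
      with k0 k(4) race_event_disjoint[of k ?Kw k0 ?lw "L k" 0] have "k = k0"
        by blast
      with k show "0 < S k0 \<and> 0 < T k0 \<and> L k0 \<le> sample_slack ?lw (sample \<omega>) k0"
        by (auto simp: race_event_def)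
    qed
    finally show ?case .
  qed
qed

lemma prob_cws_eq_sum_race_event:
  fixes p :: real and S T W L :: "nat \<Rightarrow> real"
  defines "W \<equiv> \<lambda>k. max (S k) (T k)"
  defines "L \<equiv> \<lambda>k. p * ln (W k) - p * ln (min (S k) (T k))"
  assumes p: "p > 0" and S: "\<And>k. 0 \<le> S k" and T: "\<And>k. 0 \<le> T k"
    and suppS: "\<exists>k<2 * D. 0 < S k" and suppT: "\<exists>k<2 * D. 0 < T k"
  shows "prob {\<omega> \<in> space M. cws_sample p S \<omega> = cws_sample p T \<omega>}
       = (\<Sum>k\<in>{k. k < 2 * D \<and> 0 < S k \<and> 0 < T k}.
            prob (race_event (\<lambda>k. p * ln (W k)) {k. k < 2 * D \<and> 0 < W k} k (L k)))"
proof -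
  let ?lw = "\<lambda>k. p * ln (W k)" and ?Kw = "{k. k < 2 * D \<and> 0 < W k}"
    and ?Kb = "{k. k < 2 * D \<and> 0 < S k \<and> 0 < T k}"
  have Kw: "?Kw \<subseteq> {..<2 * D}" "finite ?Kw" and Kb: "?Kb \<subseteq> ?Kw" "finite ?Kb"
    by (auto simp: W_def intro: finite_subset[of _ "{..<2 * D}"])
  note [measurable] = measurable_cws[OF suppS] measurable_cws[OF suppT]
  have "prob {\<omega> \<in> space M. cws_sample p S \<omega> = cws_sample p T \<omega>}
      = prob (\<Union>k\<in>?Kb. race_event ?lw ?Kw k (L k))"
    using Kw Kb AE_cws_eq_iff_race_event[OF p S T suppS suppT]
    by (intro measure_eq_AE sets.finite_UN race_event_sets)
       (auto simp: W_def L_def elim!: eventually_mono)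
  also have "\<dots> = (\<Sum>k\<in>?Kb. prob (race_event ?lw ?Kw k (L k)))"
  proof (intro finite_measure_finite_Union)
    show "disjoint_family_on (\<lambda>k. race_event ?lw ?Kw k (L k)) ?Kb"
      unfolding disjoint_family_on_def using Kb by (intro ballI impI race_event_disjoint) auto
  qed (use Kw Kb race_event_sets in auto)
  finally show ?thesis .
qed

lemma prob_cws_eq:
  fixes p :: real and S T :: "nat \<Rightarrow> real"
  assumes p: "p > 0" and S: "\<And>k. 0 \<le> S k" and T: "\<And>k. 0 \<le> T k"
    and suppS: "\<exists>k<2 * D. 0 < S k" and suppT: "\<exists>k<2 * D. 0 < T k"
  shows "prob {\<omega> \<in> space M. cws_sample p S \<omega> = cws_sample p T \<omega>}
       = (\<Sum>k<2 * D. min (S k) (T k) powr p) / (\<Sum>k<2 * D. max (S k) (T k) powr p)"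
proof -
  define W where "W k = max (S k) (T k)" for k
  define lw where "lw k = p * ln (W k)" for k
  define L where "L k = lw k - p * ln (min (S k) (T k))" for k
  define Kw where "Kw = {k. k < 2 * D \<and> 0 < W k}"
  define Kb where "Kb = {k. k < 2 * D \<and> 0 < S k \<and> 0 < T k}"
  have Z: "(\<Sum>j\<in>Kw. exp (lw j)) = (\<Sum>k<2 * D. W k powr p)"
  proof -
    have "(\<Sum>j\<in>Kw. exp (lw j)) = (\<Sum>k\<in>Kw. W k powr p)"
      by (intro sum.cong) (auto simp: Kw_def lw_def powr_def mult.commute)
    also have "\<dots> = (\<Sum>k<2 * D. W k powr p)"
      using S T by (intro sum.mono_neutral_left) (auto simp: Kw_def W_def max_def order.strict_iff_order)
    finally show ?thesis .
  qed
  have "prob {\<omega> \<in> space M. cws_sample p S \<omega> = cws_sample p T \<omega>}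
      = (\<Sum>k\<in>Kb. prob (race_event lw Kw k (L k)))"
    using prob_cws_eq_sum_race_event[OF p S T suppS suppT]
    unfolding lw_def[abs_def] L_def[abs_def] Kw_def Kb_def W_def[abs_def] .
  also have "\<dots> = (\<Sum>k\<in>Kb. min (S k) (T k) powr p / (\<Sum>k<2 * D. W k powr p))"
  proof (intro sum.cong refl)
    fix k assume "k \<in> Kb"
    then have pos: "0 < min (S k) (T k)" "min (S k) (T k) \<le> W k" "k \<in> Kw" "Kw \<subseteq> {..<2 * D}"
      by (auto simp: Kb_def Kw_def W_def)
    then have "L k \<ge> 0"
      using p by (simp add: L_def lw_def mult_left_mono order.strict_trans2[OF pos(1,2)])
    moreover have "exp (- L k) * exp (lw k) = min (S k) (T k) powr p"
      using pos(1) by (simp add: L_def powr_def mult.commute less_imp_neq[symmetric] flip: exp_add)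
    ultimately show "prob (race_event lw Kw k (L k)) = min (S k) (T k) powr p / (\<Sum>k<2 * D. W k powr p)"
      using pos by (simp add: measure_def emeasure_race_event Z sum_nonneg)
  qed
  also have "\<dots> = (\<Sum>k<2 * D. min (S k) (T k) powr p) / (\<Sum>k<2 * D. W k powr p)"
  proof -
    have "min (S k) (T k) = 0" if "k < 2 * D" "k \<notin> Kb" for k
      using that S[of k] T[of k] by (auto simp: Kb_def min_def)
    then have "(\<Sum>k\<in>Kb. min (S k) (T k) powr p) = (\<Sum>k<2 * D. min (S k) (T k) powr p)"
      by (intro sum.mono_neutral_left) (auto simp: Kb_def)
    then show ?thesis
      by (simp add: sum_divide_distrib[symmetric])
  qed
  finally show ?thesis
    by (simp add: W_def)
qed

end

section \<open>Hashing the samples\<close>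

lemma measurable_cws_of_sample:
  assumes "\<exists>k<N. 0 < s k" and "\<And>k. k < N \<Longrightarrow> {RI k, CI k, BI k} \<subseteq> J"
  shows "(\<lambda>y. cws N p s (\<lambda>k. y (RI k)) (\<lambda>k. y (CI k)) (\<lambda>k. y (BI k))) \<in> Pi\<^sub>M J (\<lambda>_. borel) \<rightarrow>\<^sub>M count_space UNIV"
  using assms(2) by (intro measurable_cws[OF assms(1)] measurable_component_singleton) auto

lemma measurable_select_GI:
  fixes F :: "'a \<Rightarrow> nat \<times> int"
  assumes F: "F \<in> S \<rightarrow>\<^sub>M count_space UNIV" and range: "\<And>y. fst (F y) < N"
    and J: "\<And>k t. k < N \<Longrightarrow> GI k t \<in> J"
  shows "(\<lambda>y. snd y (GI (fst (F (fst y))) (snd (F (fst y))))) \<in> borel_measurable (S \<Otimes>\<^sub>M Pi\<^sub>M J (\<lambda>_. borel))"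
proof (rule measurable_compose_countable'[where I = "{..<N} \<times> UNIV"
      and f = "\<lambda>q y. snd y (GI (fst q) (snd q))" and g = "\<lambda>y. F (fst y)"])
  have "(\<lambda>y. F (fst y)) \<in> S \<Otimes>\<^sub>M Pi\<^sub>M J (\<lambda>_. borel) \<rightarrow>\<^sub>M count_space UNIV"
    using F by measurable
  then show "(\<lambda>y. F (fst y)) \<in> S \<Otimes>\<^sub>M Pi\<^sub>M J (\<lambda>_. borel) \<rightarrow>\<^sub>M count_space ({..<N} \<times> UNIV)"
    using range by (simp add: measurable_count_space_eq2_countable mem_Times_iff Pi_iff; blast)
next
  fix q :: "nat \<times> int" assume "q \<in> {..<N} \<times> UNIV"
  then have [measurable]: "GI (fst q) (snd q) \<in> J"
    by (auto intro: J)
  show "(\<lambda>y. snd y (GI (fst q) (snd q))) \<in> borel_measurable (S \<Otimes>\<^sub>M Pi\<^sub>M J (\<lambda>_. borel))"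
    by measurable
qed simp

locale hashed_gcws = gcws_randomness M X D for M :: "'w measure" and X D +
  fixes b :: nat
  assumes uniform_hash: "\<And>k t m. k < 2 * D \<Longrightarrow> m < 2 ^ b \<Longrightarrow> prob {\<omega> \<in> space M. X (GI k t) \<omega> = real m} = 1 / 2 ^ b"
begin

abbreviation hash :: "'w \<Rightarrow> nat \<times> int \<Rightarrow> real" where
  "hash \<omega> q \<equiv> X (GI (fst q) (snd q)) \<omega>"

lemma prob_hash_eq:
  assumes "q \<noteq> q'" "fst q < 2 * D" "fst q' < 2 * D"
  shows "prob {\<omega> \<in> space M. hash \<omega> q = hash \<omega> q'} = 1 / 2 ^ b"
  using assms uniform_hash
  by (intro prob_indep_uniform_eq[OF indep, where n = "2 ^ b", simplified])
     (auto simp: rv_indices_def prod_eq_iff)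

text \<open>The hash values are independent of the random numbers of GCWS, so conditionally on the
  latter two different samples collide with probability \<open>1 / 2 ^ b\<close>.\<close>
lemma emeasure_hash_cws_eq:
  assumes suppS: "\<exists>k<2 * D. 0 < S k" and suppT: "\<exists>k<2 * D. 0 < T k"
  shows "emeasure M {\<omega> \<in> space M. hash \<omega> (cws_sample p S \<omega>) = hash \<omega> (cws_sample p T \<omega>)}
       = (\<integral>\<^sup>+\<omega>. ennreal (if cws_sample p S \<omega> = cws_sample p T \<omega> then 1 else 1 / 2 ^ b) \<partial>M)"
proof -
  define J1 where "J1 = {i. \<exists>k<2 * D. i = RI k \<or> i = CI k \<or> i = BI k}"
  define J2 where "J2 = {i. \<exists>k t. k < 2 * D \<and> i = GI k t}"
  let ?S = "Pi\<^sub>M J1 (\<lambda>_. borel :: real measure)" and ?T = "Pi\<^sub>M J2 (\<lambda>_. borel :: real measure)"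
  have "J1 \<inter> J2 = {}" "J1 \<subseteq> rv_indices D" "J2 \<subseteq> rv_indices D"
    by (auto simp: J1_def J2_def rv_indices_def)
  then have iv: "indep_var ?S (\<lambda>\<omega>. restrict (sample \<omega>) J1) ?T (\<lambda>\<omega>. restrict (sample \<omega>) J2)"
    by (rule indep_var_restrict[OF indep])
  define F where "F s y = cws (2 * D) p s (\<lambda>k. y (RI k)) (\<lambda>k. y (CI k)) (\<lambda>k. y (BI k))" for s y
  have F_sample: "F s (restrict (sample \<omega>) J1) = cws_sample p s \<omega>" if "\<exists>k<2 * D. 0 < s k" for s \<omega>
    unfolding F_def using that by (rule cws_cong) (auto simp: J1_def)
  have hash_F: "(\<lambda>y. snd y (GI (fst (F s (fst y))) (snd (F s (fst y))))) \<in> borel_measurable (?S \<Otimes>\<^sub>M ?T)"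
    if "\<exists>k<2 * D. 0 < s k" for s
    unfolding F_def
    by (intro measurable_select_GI[OF measurable_cws_of_sample[OF that] fst_cws_less[OF that]])
       (auto simp: J1_def J2_def)
  define Q where "Q = {y \<in> space (?S \<Otimes>\<^sub>M ?T).
    snd y (GI (fst (F S (fst y))) (snd (F S (fst y)))) = snd y (GI (fst (F T (fst y))) (snd (F T (fst y))))}"
  have Q: "Q \<in> sets (?S \<Otimes>\<^sub>M ?T)"
    unfolding Q_def by (rule borel_measurable_eq[OF hash_F[OF suppS] hash_F[OF suppT]])
  have Q_iff: "(restrict (sample \<omega>) J1, restrict (sample \<omega>') J2) \<in> Q
      \<longleftrightarrow> hash \<omega>' (cws_sample p S \<omega>) = hash \<omega>' (cws_sample p T \<omega>)" for \<omega> \<omega>'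
    using fst_cws_less[OF suppS] fst_cws_less[OF suppT]
    by (simp add: Q_def F_sample[OF suppS] F_sample[OF suppT] space_pair_measure space_PiM J2_def)
  have "emeasure M {\<omega> \<in> space M. hash \<omega> (cws_sample p S \<omega>) = hash \<omega> (cws_sample p T \<omega>)}
      = (\<integral>\<^sup>+\<omega>. emeasure M {\<omega>' \<in> space M. hash \<omega>' (cws_sample p S \<omega>) = hash \<omega>' (cws_sample p T \<omega>)} \<partial>M)"
    using indep_var_emeasure[OF iv Q] by (simp add: Q_iff)
  also have "\<dots> = (\<integral>\<^sup>+\<omega>. ennreal (if cws_sample p S \<omega> = cws_sample p T \<omega> then 1 else 1 / 2 ^ b) \<partial>M)"
    using fst_cws_less[OF suppS] fst_cws_less[OF suppT]
    by (intro nn_integral_cong) (simp add: emeasure_eq_measure prob_hash_eq prob_space)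
  finally show ?thesis .
qed

lemma prob_hash_cws_eq:
  fixes p :: real and S T :: "nat \<Rightarrow> real"
  defines "P \<equiv> prob {\<omega> \<in> space M. cws_sample p S \<omega> = cws_sample p T \<omega>}"
  assumes suppS: "\<exists>k<2 * D. 0 < S k" and suppT: "\<exists>k<2 * D. 0 < T k"
  shows "prob {\<omega> \<in> space M. hash \<omega> (cws_sample p S \<omega>) = hash \<omega> (cws_sample p T \<omega>)} = P + 1 / 2 ^ b * (1 - P)"
proof -
  note [measurable] = measurable_cws[OF suppS] measurable_cws[OF suppT]
  have "{\<omega> \<in> space M. cws_sample p S \<omega> = cws_sample p T \<omega>} \<in> sets M"
    by measurable
  then have "emeasure M {\<omega> \<in> space M. hash \<omega> (cws_sample p S \<omega>) = hash \<omega> (cws_sample p T \<omega>)}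
      = (\<integral>\<^sup>+\<omega>. ennreal (1 / 2 ^ b) + ennreal (1 - 1 / 2 ^ b) *
          indicator {\<omega> \<in> space M. cws_sample p S \<omega> = cws_sample p T \<omega>} \<omega> \<partial>M)"
    unfolding emeasure_hash_cws_eq[OF suppS suppT]
    by (intro nn_integral_cong) (simp add: indicator_def flip: ennreal_plus)
  also have "\<dots> = ennreal (1 / 2 ^ b + (1 - 1 / 2 ^ b) * P)"
    using \<open>{\<omega> \<in> space M. cws_sample p S \<omega> = cws_sample p T \<omega>} \<in> sets M\<close>
    by (simp add: nn_integral_add nn_integral_cmult emeasure_space_1 P_def emeasure_eq_measure
        prob_space ennreal_mult[symmetric] flip: ennreal_plus)
  finally have "emeasure M {\<omega> \<in> space M. hash \<omega> (cws_sample p S \<omega>) = hash \<omega> (cws_sample p T \<omega>)}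
      = ennreal (1 / 2 ^ b + (1 - 1 / 2 ^ b) * P)" .
  moreover have "0 \<le> 1 / 2 ^ b + (1 - 1 / 2 ^ b) * P"
    by (intro add_nonneg_nonneg mult_nonneg_nonneg) (auto simp: P_def)
  ultimately have "prob {\<omega> \<in> space M. hash \<omega> (cws_sample p S \<omega>) = hash \<omega> (cws_sample p T \<omega>)}
      = 1 / 2 ^ b + (1 - 1 / 2 ^ b) * P"
    by (simp add: measure_def)
  then show ?thesis
    by (simp add: field_simps)
qed

end

theorem theorem2:
  fixes M :: "'w measure" and X :: "rv_idx \<Rightarrow> 'w \<Rightarrow> real"
    and D b :: nat and p :: real and u v :: "nat \<Rightarrow> real"
  assumes "prob_space M"
    and "D \<ge> 1" and "p > 0" and "b \<ge> 1"
    and "\<exists>i<D. u i \<noteq> 0" and "\<exists>i<D. v i \<noteq> 0"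
    and "prob_space.indep_vars M (\<lambda>_. borel) X (rv_indices D)"
    and "\<And>k. k < 2*D \<Longrightarrow> distributed M lborel (X (RI k)) (\<lambda>x. ennreal (erlang_density 1 1 x))"
    and "\<And>k. k < 2*D \<Longrightarrow> distributed M lborel (X (CI k)) (\<lambda>x. ennreal (erlang_density 1 1 x))"
    and "\<And>k. k < 2*D \<Longrightarrow> distributed M lborel (X (BI k)) (\<lambda>x. indicator {0..1} x)"
    and "\<And>k t m. k < 2*D \<Longrightarrow> m < 2^b \<Longrightarrow>
           measure M {w \<in> space M. X (GI k t) w = real m} = 1 / 2^b"
  shows "measure M {w \<in> space M.
           (let r = (\<lambda>k. X (RI k) w); c = (\<lambda>k. X (CI k) w); beta = (\<lambda>k. X (BI k) w);
                (iu, tu) = gcws D p u r c beta; (iv, tv) = gcws D p v r c beta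
            in X (GI iu tu) w = X (GI iv tv) w)}
         = pGMM D u v p + (1 / 2^b) * (1 - pGMM D u v p)"
proof -
  interpret hashed_gcws M X D b
    using assms by (intro hashed_gcws.intro gcws_randomness.intro gcws_randomness_axioms.intro
        hashed_gcws_axioms.intro) auto
  have supp: "\<exists>k<2 * D. 0 < sign_split u k" "\<exists>k<2 * D. 0 < sign_split v k"
    using assms(5,6) by (auto intro: sign_split_support)
  have "prob {\<omega> \<in> space M. cws_sample p (sign_split u) \<omega> = cws_sample p (sign_split v) \<omega>} = pGMM D u v p"
    unfolding pGMM_def by (rule prob_cws_eq[OF \<open>p > 0\<close> sign_split_nonneg sign_split_nonneg supp])
  with prob_hash_cws_eq[OF supp, of p] show ?thesis
    by (simp add: gcws_eq_cws Let_def case_prod_beta)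
qed

end
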